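(* Under the standing assumptions below, if there exist $a,b\in I_{\mathcal{C}}$ with $a<b$ such that $$\sum_{k=1}^{2n}(-1)^k\theta_kL_k(a)<\Omega_0L<\sum_{k=1}^{2n}(-1)^k\theta_kL_k(b),$$ then the periodic cylinder $\mathcal{C}$ is $\lambda$-stable. Moreover, the $\lambda$-stable periodic orbit contained in $\mathcal{C}$ passes through $(s,\hat\theta_0)$ for some base foot point $s\in(a,b)$.
   Context: Let $P$ be a simply connected polygon with $d$ sides labeled $1,\dots,d$, $\partial P$ oriented anticlockwise, and let $\Phi$ be its billiard map, written in coordinates $(s,\theta)$ ($s$ the arc-length parameter on $\partial P$, $\theta\in(-\pi/2,\pi/2)$ the oriented angle from the inward normal). $\beta_{i,j}$ is $\pi$ minus the angle formed by the oriented sides $i$ and $j$, so that the angle after a collision from side $i$ to side $j$ is $\beta_{i,j}-\theta$. For $\lambda>0$, $R_\lambda(s,\theta)=(s,\lambda\theta)$ and $\Phi_\lambda=R_\lambda\circ\Phi$. A periodic orbit $q$ of $\Phi$ is $\lambda^{+}$-stable (resp. $\lambda^-$-stable) if there are a strictly decreasing (resp. increasing) sequence $\lambda_n\to1$ and periodic orbits $q_n$ of $\Phi_{\lambda_n}$ hitting the same sequence of sides as $q$ with $q_n\to q$; a periodic cylinder (maximal family of parallel periodic orbits of $\Phi$ with common itinerary) is $\lambda$-stable if it contains a $\lambda^+$-stable orbit and a $\lambda^-$-stable orbit. Let $\ell_i$ be the line supporting side $i$ and $x_i$ its arc-length parametrization extending that of side $i$. For distinct sides $i,j$, $\Phi_{i,j}(s,\theta):=(s',\beta_{i,j}-\theta)$,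 where $x_j(s')$ is the intersection with $\ell_j$ of the line through $x_i(s)$ whose direction makes angle $\theta$ with the inward normal of side $i$; $t(s,\theta)$ is the oriented length of the segment from $x_i(s)$ to $x_j(s')$. Standing assumptions: $\mathcal{C}$ is a periodic cylinder of even period $2n>2$ with itinerary $i_0,\dots,i_{2n-1}$ (indices mod $2n$) and collision angles $\hat\theta_0,\dots,\hat\theta_{2n-1}$, with $\hat\theta_0=\frac{1}{2n}\sum_{k=0}^{2n-1}(-1)^{k+1}k\beta_{i_k,i_{k+1}}$; write $\theta_k:=\hat\theta_k$ (so $\theta_{2n}=\theta_0$). Define $\theta_0(\lambda):=\frac{1}{\lambda^{2n}-1}\sum_{k=0}^{2n-1}(-\lambda)^{2n-k}\beta_{i_k,i_{k+1}}$, $\theta_k(\lambda):=\lambda(\beta_{i_{k-1},i_k}-\theta_{k-1}(\lambda))$, and $F_k(s,\lambda):=\pi_1\circ R_\lambda\circ\Phi_{i_{k-1},i_k}\circ\cdots\circ R_\lambda\circ\Phi_{i_0,i_1}(s,\theta_0(\lambda))$ for $\lambda$ near $1$, $\pi_1(s,\theta)=s$. The base $I_{\mathcal{C}}$ is the open interval of $s$ such that $(s,\hat\theta_0)$ is a periodic point of $\Phi$ with the itinerary of $\mathcal{C}$ (base foot points). For $s\in I_{\mathcal{C}}$ let $s_0=s$, $s_k=F_k(s,1)$, $L_0(s)=0$ and $L_k(s):=\sum_{i=0}^{k-1}t(s_i,\theta_i)$ (segment from side $i_i$ to side $i_{i+1}$); $L:=L_{2n}(s)$ is the length of the cylinder,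 independent of $s$. Finally $\Omega_0:=\frac{1}{4n}\sum_{k=0}^{2n-1}(-1)^{k+1}k(2n-k)\beta_{i_k,i_{k+1}}$. *)

theory Defs
  imports "HOL-Analysis.Analysis"
begin

(* Polygon given by its vertices V 0, ..., V (d-1) (points of the plane = complex numbers).
   Side i (0 <= i < d) is the oriented segment from V i to V ((i+1) mod d).
   (The paper labels sides 1..d; we label them 0..d-1.) *)

definition nxt :: "nat \<Rightarrow> nat \<Rightarrow> nat" where
  "nxt d i = Suc i mod d"

definition side :: "(nat \<Rightarrow> complex) \<Rightarrow> nat \<Rightarrow> nat \<Rightarrow> complex set" where
  "side V d i = closed_segment (V i) (V (nxt d i))"

definition bdry :: "(nat \<Rightarrow> complex) \<Rightarrow> nat \<Rightarrow> complex set" where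
  "bdry V d = (\<Union>i<d. side V d i)"

(* simple closed polygon with d >= 3 sides, boundary oriented anticlockwise
   (positive signed area); its interior is then simply connected *)
definition simple_ccw_polygon :: "(nat \<Rightarrow> complex) \<Rightarrow> nat \<Rightarrow> bool" where
  "simple_ccw_polygon V d \<longleftrightarrow>
     3 \<le> d \<and> inj_on V {..<d} \<and>
     (\<forall>i<d. \<forall>j<d. i \<noteq> j \<longrightarrow>
        side V d i \<inter> side V d j \<subseteq> {V i, V (nxt d i)} \<inter> {V j, V (nxt d j)}) \<and>
     (\<Sum>i<d. Im (cnj (V i) * V (nxt d i))) > 0"

definition S0 :: "(nat \<Rightarrow> complex) \<Rightarrow> nat \<Rightarrow> nat \<Rightarrow> real" where
  "S0 V d i = (\<Sum>m<i. cmod (V (nxt d m) - V m))"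

definition u :: "(nat \<Rightarrow> complex) \<Rightarrow> nat \<Rightarrow> nat \<Rightarrow> complex" where
  "u V d i = (V (nxt d i) - V i) / complex_of_real (cmod (V (nxt d i) - V i))"

(* arc-length parametrisation x_i of the line l_i, extending that of side i *)
definition xl :: "(nat \<Rightarrow> complex) \<Rightarrow> nat \<Rightarrow> nat \<Rightarrow> real \<Rightarrow> complex" where
  "xl V d i s = V i + complex_of_real (s - S0 V d i) * u V d i"

definition on_side :: "(nat \<Rightarrow> complex) \<Rightarrow> nat \<Rightarrow> nat \<Rightarrow> real \<Rightarrow> bool" where
  "on_side V d i s \<longleftrightarrow> i < d \<and> S0 V d i < s \<and> s < S0 V d (Suc i)"

(* unit direction leaving side i making oriented angle theta with the inward normal
   \<i> * u_i (boundary anticlockwise); theta > 0 tilts towards the orientation of side i *)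
definition dir :: "(nat \<Rightarrow> complex) \<Rightarrow> nat \<Rightarrow> nat \<Rightarrow> real \<Rightarrow> complex" where
  "dir V d i \<theta> = \<i> * u V d i * cis (- \<theta>)"

(* beta_{i,j} = pi minus the oriented angle from side i to side j, normalised to (-pi,pi];
   with this normalisation the angle after a collision from side i to side j is beta_{i,j} - theta *)
definition beta :: "(nat \<Rightarrow> complex) \<Rightarrow> nat \<Rightarrow> nat \<Rightarrow> nat \<Rightarrow> real" where
  "beta V d i j = Arg (- u V d i * cnj (u V d j))"

(* one step of the billiard map Phi from side i to side j:
   (s,th) |-> (s',th') where x_j(s') is the first point of the boundary hit by the ray *)
definition bill :: "(nat \<Rightarrow> complex) \<Rightarrow> nat \<Rightarrow> nat \<Rightarrow> nat \<Rightarrow> real \<times> real \<Rightarrow> real \<times> real \<Rightarrow> bool" where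
  "bill V d i j p p' \<longleftrightarrow>
     on_side V d i (fst p) \<and> \<bar>snd p\<bar> < pi / 2 \<and>
     (let x = xl V d i (fst p); w = dir V d i (snd p);
          T = {t::real. 0 < t \<and> x + complex_of_real t * w \<in> bdry V d}
      in Inf T \<in> T \<and> x + complex_of_real (Inf T) * w = xl V d j (fst p')) \<and>
     on_side V d j (fst p') \<and> snd p' = beta V d i j - snd p"

(* one step of Phi_lambda = R_lambda o Phi from side i to side j *)
definition bill_lam :: "(nat \<Rightarrow> complex) \<Rightarrow> nat \<Rightarrow> real \<Rightarrow> nat \<Rightarrow> nat \<Rightarrow> real \<times> real \<Rightarrow> real \<times> real \<Rightarrow> bool" where
  "bill_lam V d lam i j p p' \<longleftrightarrow> (\<exists>th'. bill V d i j p (fst p', th') \<and> snd p' = lam * th')"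

definition porbit :: "(nat \<Rightarrow> complex) \<Rightarrow> nat \<Rightarrow> real \<Rightarrow> nat \<Rightarrow> (nat \<Rightarrow> nat) \<Rightarrow> (nat \<Rightarrow> real \<times> real) \<Rightarrow> bool" where
  "porbit V d lam n it q \<longleftrightarrow>
     (\<forall>k<2*n. bill_lam V d lam (it k) (it (Suc k)) (q k) (q (Suc k))) \<and> q (2*n) = q 0"

definition lam_plus_stable :: "(nat \<Rightarrow> complex) \<Rightarrow> nat \<Rightarrow> nat \<Rightarrow> (nat \<Rightarrow> nat) \<Rightarrow> (nat \<Rightarrow> real \<times> real) \<Rightarrow> bool" where
  "lam_plus_stable V d n it q \<longleftrightarrow> porbit V d 1 n it q \<and>
     (\<exists>l :: nat \<Rightarrow> real. \<exists>Q :: nat \<Rightarrow> nat \<Rightarrow> real \<times> real.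
        (\<forall>m. 0 < l m \<and> l (Suc m) < l m) \<and> l \<longlonglongrightarrow> 1 \<and>
        (\<forall>m. porbit V d (l m) n it (Q m)) \<and>
        (\<forall>k\<le>2*n. (\<lambda>m. Q m k) \<longlonglongrightarrow> q k))"

definition lam_minus_stable :: "(nat \<Rightarrow> complex) \<Rightarrow> nat \<Rightarrow> nat \<Rightarrow> (nat \<Rightarrow> nat) \<Rightarrow> (nat \<Rightarrow> real \<times> real) \<Rightarrow> bool" where
  "lam_minus_stable V d n it q \<longleftrightarrow> porbit V d 1 n it q \<and>
     (\<exists>l :: nat \<Rightarrow> real. \<exists>Q :: nat \<Rightarrow> nat \<Rightarrow> real \<times> real.
        (\<forall>m. 0 < l m \<and> l m < l (Suc m)) \<and> l \<longlonglongrightarrow> 1 \<and>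
        (\<forall>m. porbit V d (l m) n it (Q m)) \<and>
        (\<forall>k\<le>2*n. (\<lambda>m. Q m k) \<longlonglongrightarrow> q k))"

(* base I_C of the cylinder: foot points s such that (s, th0) is a periodic point of Phi
   with the itinerary of C *)
definition base :: "(nat \<Rightarrow> complex) \<Rightarrow> nat \<Rightarrow> nat \<Rightarrow> (nat \<Rightarrow> nat) \<Rightarrow> real \<Rightarrow> real set" where
  "base V d n it th0 = {s. \<exists>q. porbit V d 1 n it q \<and> q 0 = (s, th0)}"

definition cyl_lam_stable :: "(nat \<Rightarrow> complex) \<Rightarrow> nat \<Rightarrow> nat \<Rightarrow> (nat \<Rightarrow> nat) \<Rightarrow> real \<Rightarrow> bool" where
  "cyl_lam_stable V d n it th0 \<longleftrightarrow>
     (\<exists>q s. s \<in> base V d n it th0 \<and> q 0 = (s, th0) \<and> lam_plus_stable V d n it q) \<and>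
     (\<exists>q s. s \<in> base V d n it th0 \<and> q 0 = (s, th0) \<and> lam_minus_stable V d n it q)"

fun thk :: "(nat \<Rightarrow> complex) \<Rightarrow> nat \<Rightarrow> (nat \<Rightarrow> nat) \<Rightarrow> real \<Rightarrow> nat \<Rightarrow> real" where
  "thk V d it th0 0 = th0"
| "thk V d it th0 (Suc k) = beta V d (it k) (it (Suc k)) - thk V d it th0 k"

(* Phi_{i,j} on lines: oriented length t(s,th) and new parameter s' *)
definition tlen :: "(nat \<Rightarrow> complex) \<Rightarrow> nat \<Rightarrow> nat \<Rightarrow> nat \<Rightarrow> real \<Rightarrow> real \<Rightarrow> real" where
  "tlen V d i j s \<theta> =
     Im (cnj (u V d j) * (V j - xl V d i s)) / Im (cnj (u V d j) * dir V d i \<theta>)"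

definition snew :: "(nat \<Rightarrow> complex) \<Rightarrow> nat \<Rightarrow> nat \<Rightarrow> nat \<Rightarrow> real \<Rightarrow> real \<Rightarrow> real" where
  "snew V d i j s \<theta> =
     S0 V d j + Re (cnj (u V d j) *
        (xl V d i s + complex_of_real (tlen V d i j s \<theta>) * dir V d i \<theta> - V j))"

fun sk :: "(nat \<Rightarrow> complex) \<Rightarrow> nat \<Rightarrow> (nat \<Rightarrow> nat) \<Rightarrow> real \<Rightarrow> real \<Rightarrow> nat \<Rightarrow> real" where
  "sk V d it th0 s 0 = s"
| "sk V d it th0 s (Suc k) =
     snew V d (it k) (it (Suc k)) (sk V d it th0 s k) (thk V d it th0 k)"

definition Lk :: "(nat \<Rightarrow> complex) \<Rightarrow> nat \<Rightarrow> (nat \<Rightarrow> nat) \<Rightarrow> real \<Rightarrow> real \<Rightarrow> nat \<Rightarrow> real" where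
  "Lk V d it th0 s k =
     (\<Sum>m<k. tlen V d (it m) (it (Suc m)) (sk V d it th0 s m) (thk V d it th0 m))"

definition Omega0 :: "(nat \<Rightarrow> complex) \<Rightarrow> nat \<Rightarrow> nat \<Rightarrow> (nat \<Rightarrow> nat) \<Rightarrow> real" where
  "Omega0 V d n it = (1 / (4 * real n)) *
     (\<Sum>k<2*n. (-1) ^ (k+1) * real k * real (2*n - k) * beta V d (it k) (it (Suc k)))"

end

theory Submission
  imports Defs
begin

text \<open>
  A periodic orbit of \<open>\<Phi>\<^sub>\<lambda>\<close> with the itinerary of the cylinder is a fixed point of
  \<open>s \<mapsto> F\<^sub>2\<^sub>n(s, \<lambda>)\<close>, since \<open>\<theta>\<^sub>0(\<lambda>)\<close> makes the collision angles close up. For fixed \<open>\<lambda>\<close> this map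
  is affine in \<open>s\<close>, and at \<open>\<lambda> = 1\<close> it is the identity on the base. Differentiating in \<open>\<lambda>\<close> and
  summing by parts gives \<open>cos \<theta>\<^sub>0 \<cdot> \<partial>\<^sub>\<lambda>F\<^sub>2\<^sub>n(s, 1) = \<Omega>\<^sub>0 L - \<Sum>\<^sub>k (-1)\<^sup>k \<theta>\<^sub>k L\<^sub>k(s)\<close>, which is affine in
  \<open>s\<close> and by hypothesis changes sign between \<open>a\<close> and \<open>b\<close>. Its zero \<open>s\<^sup>*\<close> is therefore the limit,
  as \<open>\<lambda> \<rightarrow> 1\<close> from either side, of the fixed points of \<open>F\<^sub>2\<^sub>n(\<cdot>, \<lambda>)\<close>. These fixed points come
  from genuine billiard orbits: in a simply connected polygon, a ray from side \<open>i\<close> to side \<open>j\<close>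
  squeezed between two billiard chords from \<open>i\<close> to \<open>j\<close> is itself a billiard chord.
\<close>

lemma cos_pos_of_abs_less: "\<bar>x\<bar> < pi / 2 \<Longrightarrow> cos x > 0"
  by (rule cos_gt_zero_pi) (auto simp: abs_less_iff)

lemma affine_between:
  fixes a b x p q :: real
  assumes "min a b \<le> x" "x \<le> max a b"
  shows "min (p + q * a) (p + q * b) \<le> p + q * x \<and> p + q * x \<le> max (p + q * a) (p + q * b)"
proof (cases "0 \<le> q")
  case True
  then have "q * min a b \<le> q * x" "q * x \<le> q * max a b" using assms by (auto intro: mult_left_mono)
  then show ?thesis by (auto simp: min_def max_def split: if_splits)
next
  case False
  then have "q * x \<le> q * min a b" "q * max a b \<le> q * x" using assms by (auto intro: mult_left_mono_neg)
  then show ?thesis by (auto simp: min_def max_def split: if_splits)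
qed

lemma between_of_affine_between:
  fixes a b x p q :: real
  assumes "min (p + q * a) (p + q * b) < p + q * x" "p + q * x < max (p + q * a) (p + q * b)"
  shows "min a b < x \<and> x < max a b"
  using assms by (cases "0 < q") (auto simp: min_def max_def mult_less_cancel_left split: if_splits)

lemma convex_comb_between:
  fixes l r x y \<nu> :: real
  assumes "l < x" "x < r" "l < y" "y < r" "0 \<le> \<nu>" "\<nu> \<le> 1"
  shows "l < (1 - \<nu>) * x + \<nu> * y \<and> (1 - \<nu>) * x + \<nu> * y < r"
proof -
  have "(1 - \<nu>) *\<^sub>R x + \<nu> *\<^sub>R y \<in> {l<..<r}"
    by (rule convexD_alt[OF convex_real_interval(8)]) (use assms in auto)
  then show ?thesis by simp
qed

lemma strictly_between:
  fixes x y \<rho> :: real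
  assumes "x \<noteq> y" "0 < \<rho>" "\<rho> < 1"
  shows "min x y < x + \<rho> * (y - x) \<and> x + \<rho> * (y - x) < max x y"
proof -
  have "0 < \<rho> * \<bar>y - x\<bar>" "\<rho> * \<bar>y - x\<bar> < 1 * \<bar>y - x\<bar>"
    using assms by (auto intro: mult_strict_right_mono)
  then show ?thesis by (cases "x < y") (auto simp: min_def max_def abs_if algebra_simps)
qed

section \<open>Sides and lines of a polygon\<close>

locale ccw_polygon =
  fixes V :: "nat \<Rightarrow> complex" and d :: nat
  assumes simple_ccw: "simple_ccw_polygon V d"
begin

abbreviation ud :: "nat \<Rightarrow> complex" where "ud \<equiv> u V d"
abbreviation \<beta> :: "nat \<Rightarrow> nat \<Rightarrow> real" where "\<beta> i j \<equiv> beta V d i j"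

lemma three_le_d: "3 \<le> d"
  using simple_ccw by (simp add: simple_ccw_polygon_def)

lemma side_Int_side:
  "i < d \<Longrightarrow> j < d \<Longrightarrow> i \<noteq> j \<Longrightarrow>
   side V d i \<inter> side V d j \<subseteq> {V i, V (nxt d i)} \<inter> {V j, V (nxt d j)}"
  using simple_ccw by (simp add: simple_ccw_polygon_def)

lemma nxt_less: "i < d \<Longrightarrow> nxt d i < d"
  using three_le_d by (simp add: nxt_def)

lemma nxt_neq: "i < d \<Longrightarrow> nxt d i \<noteq> i"
  using three_le_d by (cases "Suc i = d") (auto simp: nxt_def)

lemma V_nxt_neq: "i < d \<Longrightarrow> V (nxt d i) \<noteq> V i"
proof -
  have "inj_on V {..<d}" using simple_ccw by (simp add: simple_ccw_polygon_def)
  then show "i < d \<Longrightarrow> V (nxt d i) \<noteq> V i"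
    using nxt_less nxt_neq by (meson inj_on_contraD lessThan_iff)
qed

definition side_len :: "nat \<Rightarrow> real" where
  "side_len i = cmod (V (nxt d i) - V i)"

lemma side_len_pos: "i < d \<Longrightarrow> side_len i > 0"
  using V_nxt_neq by (simp add: side_len_def)

lemma S0_Suc: "S0 V d (Suc i) = S0 V d i + side_len i"
  by (simp add: S0_def side_len_def)

lemma norm_ud: "i < d \<Longrightarrow> cmod (ud i) = 1"
  using V_nxt_neq by (simp add: u_def norm_divide)

lemma cnj_ud_mult_ud: "i < d \<Longrightarrow> cnj (ud i) * ud i = 1"
  using norm_ud by (metis complex_norm_square mult.commute of_real_1 power_one complex_mult_cnj)

lemma ud_nonzero: "i < d \<Longrightarrow> ud i \<noteq> 0"
  using norm_ud by fastforce

lemma cnj_ud_mult_ud_other: "i < d \<Longrightarrow> j < d \<Longrightarrow> cnj (ud j) * ud i = - cis (\<beta> i j)"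
proof -
  assume ij: "i < d" "j < d"
  have "cmod (- ud i * cnj (ud j)) = 1" using ij by (simp add: norm_mult norm_ud)
  then have "cis (\<beta> i j) = - ud i * cnj (ud j)"
    unfolding beta_def by (metis cis_Arg norm_zero sgn_eq zero_neq_one div_by_1 of_real_1)
  then show ?thesis by (simp add: mult.commute)
qed

lemma xl_S0: "xl V d i (S0 V d i) = V i"
  by (simp add: xl_def)

lemma xl_S0_Suc: "i < d \<Longrightarrow> xl V d i (S0 V d (Suc i)) = V (nxt d i)"
  using side_len_pos[of i] by (simp add: xl_def S0_Suc u_def side_len_def[symmetric])

lemma xl_inj: "i < d \<Longrightarrow> xl V d i s = xl V d i t \<Longrightarrow> s = t"
  using ud_nonzero by (simp add: xl_def)

lemma xl_convex: "xl V d i ((1 - w) * p + w * q) = (1 - w) * xl V d i p + w * xl V d i q"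
  by (simp add: xl_def algebra_simps)

lemma side_xl_param:
  assumes "i < d" "z \<in> side V d i"
  obtains s where "S0 V d i \<le> s" "s \<le> S0 V d (Suc i)" "z = xl V d i s"
proof -
  obtain c where c: "0 \<le> c" "c \<le> 1" "z = (1 - c) *\<^sub>R V i + c *\<^sub>R V (nxt d i)"
    using assms(2) unfolding side_def closed_segment_def by auto
  have l: "side_len i > 0" using side_len_pos assms(1) .
  have "xl V d i (S0 V d i + c * side_len i) = z"
    using l by (simp add: c(3) xl_def u_def side_len_def[symmetric] scaleR_conv_of_real field_simps)
  then show ?thesis using c l that[of "S0 V d i + c * side_len i"] by (simp add: S0_Suc mult_left_le)
qed

lemma xl_in_side:
  assumes "i < d" "S0 V d i \<le> s" "s \<le> S0 V d (Suc i)"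
  shows "xl V d i s \<in> side V d i"
proof -
  have l: "side_len i > 0" using side_len_pos assms(1) .
  define c where "c = (s - S0 V d i) / side_len i"
  have c: "0 \<le> c" "c \<le> 1" using assms l by (auto simp: c_def S0_Suc field_simps)
  have "xl V d i s = (1 - c) *\<^sub>R V i + c *\<^sub>R V (nxt d i)"
    using l by (simp add: c_def xl_def u_def side_len_def[symmetric] scaleR_conv_of_real
        algebra_simps diff_divide_distrib add_divide_distrib)
  then show ?thesis using c unfolding side_def closed_segment_def by auto
qed

lemma on_side_xl_in_side: "on_side V d i s \<Longrightarrow> xl V d i s \<in> side V d i"
  by (auto simp: on_side_def intro!: xl_in_side)

lemma on_side_convex:
  "on_side V d i a \<Longrightarrow> on_side V d i b \<Longrightarrow> min a b \<le> x \<Longrightarrow> x \<le> max a b \<Longrightarrow> on_side V d i x"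
  by (auto simp: on_side_def min_def max_def split: if_splits)

lemma on_side_not_in_other_side:
  assumes s: "on_side V d i s" and r: "r < d" "r \<noteq> i"
  shows "xl V d i s \<notin> side V d r"
proof
  assume "xl V d i s \<in> side V d r"
  moreover have i: "i < d" using s by (simp add: on_side_def)
  ultimately have "xl V d i s \<in> {V i, V (nxt d i)}"
    using side_Int_side[of i r] on_side_xl_in_side[OF s] r by blast
  then show False
    using xl_inj[OF i, of s "S0 V d i"] xl_inj[OF i, of s "S0 V d (Suc i)"] xl_S0 xl_S0_Suc[OF i] s
    by (auto simp: on_side_def)
qed

lemma side_subset_bdry: "i < d \<Longrightarrow> side V d i \<subseteq> bdry V d"
  by (auto simp: bdry_def)

abbreviation ray :: "nat \<Rightarrow> real \<Rightarrow> real \<Rightarrow> real \<Rightarrow> complex" where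
  "ray i s \<theta> t \<equiv> xl V d i s + complex_of_real t * dir V d i \<theta>"

definition par_offset :: "nat \<Rightarrow> nat \<Rightarrow> real" where
  "par_offset i j = Re (cnj (ud j) * (V i - V j))"

definition perp_offset :: "nat \<Rightarrow> nat \<Rightarrow> real" where
  "perp_offset i j = Im (cnj (ud j) * (V i - V j))"

context
  fixes i j :: nat
  assumes ij: "i < d" "j < d"
begin

lemma cnj_ud_xl_diff:
  "cnj (ud j) * (xl V d i s - V j) = cnj (ud j) * (V i - V j) - of_real (s - S0 V d i) * cis (\<beta> i j)"
proof -
  have "cnj (ud j) * (xl V d i s - V j) = cnj (ud j) * (V i - V j) + of_real (s - S0 V d i) * (cnj (ud j) * ud i)"
    by (simp add: xl_def algebra_simps)
  then show ?thesis using cnj_ud_mult_ud_other[OF ij] by simp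
qed

lemma cnj_ud_dir: "cnj (ud j) * dir V d i \<theta> = - \<i> * cis (\<beta> i j - \<theta>)"
proof -
  have "cnj (ud j) * dir V d i \<theta> = \<i> * (cnj (ud j) * ud i) * cis (- \<theta>)"
    by (simp add: dir_def algebra_simps)
  also have "\<dots> = - \<i> * (cis (\<beta> i j) * cis (- \<theta>))" using cnj_ud_mult_ud_other[OF ij] by simp
  finally show ?thesis by (simp add: cis_mult)
qed

lemma Im_cnj_ud_ray:
  "Im (cnj (ud j) * (ray i s \<theta> t - V j)) =
     perp_offset i j - (s - S0 V d i) * sin (\<beta> i j) - t * cos (\<beta> i j - \<theta>)"
proof -
  have "cnj (ud j) * (ray i s \<theta> t - V j)
      = cnj (ud j) * (xl V d i s - V j) + of_real t * (cnj (ud j) * dir V d i \<theta>)"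
    by (simp add: algebra_simps)
  then show ?thesis by (simp add: cnj_ud_xl_diff cnj_ud_dir perp_offset_def cis.ctr)
qed

lemma Re_cnj_ud_ray:
  "Re (cnj (ud j) * (ray i s \<theta> t - V j)) =
     par_offset i j - (s - S0 V d i) * cos (\<beta> i j) + t * sin (\<beta> i j - \<theta>)"
proof -
  have "cnj (ud j) * (ray i s \<theta> t - V j)
      = cnj (ud j) * (xl V d i s - V j) + of_real t * (cnj (ud j) * dir V d i \<theta>)"
    by (simp add: algebra_simps)
  then show ?thesis by (simp add: cnj_ud_xl_diff cnj_ud_dir par_offset_def cis.ctr)
qed

lemma tlen_eq:
  "tlen V d i j s \<theta> = (perp_offset i j - (s - S0 V d i) * sin (\<beta> i j)) / cos (\<beta> i j - \<theta>)"
proof -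
  have e: "cnj (ud j) * (V j - xl V d i s) = - (cnj (ud j) * (xl V d i s - V j))"
    by (simp add: algebra_simps)
  have "Im (cnj (ud j) * (xl V d i s - V j)) = perp_offset i j - (s - S0 V d i) * sin (\<beta> i j)"
    using Im_cnj_ud_ray[where t = 0] by simp
  then show ?thesis
    unfolding tlen_def e uminus_complex.sel by (simp add: cnj_ud_dir cis.ctr minus_divide_left)
qed

lemma snew_eq:
  "snew V d i j s \<theta> =
     S0 V d j + par_offset i j - (s - S0 V d i) * cos (\<beta> i j) + tlen V d i j s \<theta> * sin (\<beta> i j - \<theta>)"
  using Re_cnj_ud_ray[where t = "tlen V d i j s \<theta>"] by (simp add: snew_def)

lemma tlen_affine: "\<exists>p q. \<forall>s. tlen V d i j s \<theta> = p + q * s"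
  unfolding tlen_eq
  by (intro exI[of _ "(perp_offset i j + S0 V d i * sin (\<beta> i j)) / cos (\<beta> i j - \<theta>)"]
      exI[of _ "- sin (\<beta> i j) / cos (\<beta> i j - \<theta>)"])
     (simp add: diff_divide_distrib add_divide_distrib algebra_simps)

lemma snew_affine: "\<exists>p q. \<forall>s. snew V d i j s \<theta> = p + q * s"
proof -
  obtain p q where "\<forall>s. tlen V d i j s \<theta> = p + q * s" using tlen_affine by blast
  then have "\<forall>s. snew V d i j s \<theta> =
      (S0 V d j + par_offset i j + S0 V d i * cos (\<beta> i j) + p * sin (\<beta> i j - \<theta>))
      + (q * sin (\<beta> i j - \<theta>) - cos (\<beta> i j)) * s"
    unfolding snew_eq by (simp add: algebra_simps)
  then show ?thesis by blast
qed

lemma tlen_diff: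
  "tlen V d i j s \<theta> - tlen V d i j s' \<theta> = - (s - s') * sin (\<beta> i j) / cos (\<beta> i j - \<theta>)"
  by (simp add: tlen_eq diff_divide_distrib[symmetric] algebra_simps)

lemma snew_diff:
  assumes c: "cos (\<beta> i j - \<theta>) \<noteq> 0"
  shows "snew V d i j s \<theta> - snew V d i j s' \<theta> = - (s - s') * cos \<theta> / cos (\<beta> i j - \<theta>)"
proof -
  have ct: "cos \<theta> = cos (\<beta> i j) * cos (\<beta> i j - \<theta>) + sin (\<beta> i j) * sin (\<beta> i j - \<theta>)"
    using cos_diff[of "\<beta> i j" "\<beta> i j - \<theta>"] by simp
  have "snew V d i j s \<theta> - snew V d i j s' \<theta>
     = - (s - s') * cos (\<beta> i j) + (tlen V d i j s \<theta> - tlen V d i j s' \<theta>) * sin (\<beta> i j - \<theta>)"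
    by (simp add: snew_eq algebra_simps)
  also have "\<dots> = - (s - s') * cos \<theta> / cos (\<beta> i j - \<theta>)"
    unfolding tlen_diff ct using c by (simp add: field_simps)
  finally show ?thesis .
qed

lemma snew_has_real_derivative:
  assumes c: "cos (\<beta> i j - \<theta>) \<noteq> 0"
    and f: "(f has_real_derivative f') (at 1)" and g: "(g has_real_derivative g') (at 1)"
    and g1: "g 1 = \<theta>"
  shows "((\<lambda>x. snew V d i j (f x) (g x)) has_real_derivative
     - (cos \<theta> / cos (\<beta> i j - \<theta>)) * f' - (tlen V d i j (f 1) \<theta> / cos (\<beta> i j - \<theta>)) * g') (at 1)"
proof -
  define X where "X x = perp_offset i j - (f x - S0 V d i) * sin (\<beta> i j)" for x
  have e: "(\<lambda>x. snew V d i j (f x) (g x)) =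
      (\<lambda>x. S0 V d j + par_offset i j - (f x - S0 V d i) * cos (\<beta> i j) + X x * tan (\<beta> i j - g x))"
    by (simp add: snew_eq tlen_eq X_def tan_def)
  have der: "((\<lambda>x. S0 V d j + par_offset i j - (f x - S0 V d i) * cos (\<beta> i j) + X x * tan (\<beta> i j - g x))
      has_real_derivative - f' * cos (\<beta> i j) - f' * sin (\<beta> i j) * tan (\<beta> i j - \<theta>)
        - X 1 * g' / (cos (\<beta> i j - \<theta>))\<^sup>2) (at 1)"
    unfolding X_def using c g1
    by (auto intro!: derivative_eq_intros f g simp: divide_inverse algebra_simps)
  have "cos \<theta> = cos (\<beta> i j) * cos (\<beta> i j - \<theta>) + sin (\<beta> i j) * sin (\<beta> i j - \<theta>)"
    using cos_diff[of "\<beta> i j" "\<beta> i j - \<theta>"] by simp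
  moreover have "tlen V d i j (f 1) \<theta> = X 1 / cos (\<beta> i j - \<theta>)"
    by (simp add: tlen_eq X_def)
  ultimately have "- f' * cos (\<beta> i j) - f' * sin (\<beta> i j) * tan (\<beta> i j - \<theta>)
        - X 1 * g' / (cos (\<beta> i j - \<theta>))\<^sup>2
      = - (cos \<theta> / cos (\<beta> i j - \<theta>)) * f' - (tlen V d i j (f 1) \<theta> / cos (\<beta> i j - \<theta>)) * g'"
    using c by (simp add: tan_def field_simps power2_eq_square)
  then show ?thesis unfolding e using der by simp
qed

lemma ray_tlen_hits_line:
  assumes c: "cos (\<beta> i j - \<theta>) \<noteq> 0"
  shows "ray i s \<theta> (tlen V d i j s \<theta>) = xl V d j (snew V d i j s \<theta>)"
proof -
  define z where "z = ray i s \<theta> (tlen V d i j s \<theta>) - V j"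
  define r where "r = snew V d i j s \<theta> - S0 V d j"
  have "Im (cnj (ud j) * z) = 0"
    unfolding z_def Im_cnj_ud_ray tlen_eq using c by simp
  then have w: "cnj (ud j) * z = of_real r"
    by (simp add: complex_eq_iff snew_def z_def r_def)
  have "z = (ud j * cnj (ud j)) * z" using cnj_ud_mult_ud[OF ij(2)] by (simp add: mult.commute)
  also have "\<dots> = of_real r * ud j" unfolding mult.assoc w by (simp add: mult.commute)
  finally have "z = of_real r * ud j" .
  then show ?thesis by (simp add: z_def xl_def r_def algebra_simps)
qed

lemma ray_hits_line_unique:
  assumes c: "cos (\<beta> i j - \<theta>) \<noteq> 0" and h: "ray i s \<theta> t = xl V d j s'"
  shows "t = tlen V d i j s \<theta>" "s' = snew V d i j s \<theta>"
proof -
  have "cnj (ud j) * (xl V d j s' - V j) = of_real (s' - S0 V d j)"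
    using cnj_ud_mult_ud[OF ij(2)] by (simp add: xl_def mult.left_commute)
  then have "Im (cnj (ud j) * (ray i s \<theta> t - V j)) = 0" unfolding h by simp
  then show t: "t = tlen V d i j s \<theta>"
    unfolding Im_cnj_ud_ray tlen_eq using c by (simp add: eq_divide_eq)
  then have "xl V d j s' = xl V d j (snew V d i j s \<theta>)" using ray_tlen_hits_line[OF c] h by simp
  then show "s' = snew V d i j s \<theta>" using xl_inj[OF ij(2)] by blast
qed

end

definition free_ray :: "nat \<Rightarrow> real \<Rightarrow> real \<Rightarrow> real \<Rightarrow> bool" where
  "free_ray i s \<theta> T \<longleftrightarrow> (\<forall>t. 0 < t \<longrightarrow> t < T \<longrightarrow> ray i s \<theta> t \<notin> bdry V d)"

lemma bill_D:
  assumes b: "bill V d i j (s, \<theta>) (s', \<theta>')" and c: "cos \<theta>' \<noteq> 0"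
  shows "i < d" "j < d" "\<theta>' = \<beta> i j - \<theta>" "\<bar>\<theta>\<bar> < pi / 2" "on_side V d i s" "on_side V d j s'"
    "s' = snew V d i j s \<theta>" "tlen V d i j s \<theta> > 0" "free_ray i s \<theta> (tlen V d i j s \<theta>)"
proof -
  define T where "T = {t. 0 < t \<and> ray i s \<theta> t \<in> bdry V d}"
  have B: "on_side V d i s" "\<bar>\<theta>\<bar> < pi / 2" "Inf T \<in> T" "ray i s \<theta> (Inf T) = xl V d j s'"
    "on_side V d j s'" "\<theta>' = \<beta> i j - \<theta>"
    using b by (auto simp: bill_def T_def Let_def)
  show ij: "i < d" "j < d" using B by (auto simp: on_side_def)
  show "on_side V d i s" "\<bar>\<theta>\<bar> < pi / 2" "on_side V d j s'" "\<theta>' = \<beta> i j - \<theta>" using B by simp_all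
  have c': "cos (\<beta> i j - \<theta>) \<noteq> 0" using c B by simp
  note hit = ray_hits_line_unique[OF ij c' B(4)]
  show "s' = snew V d i j s \<theta>" using hit(2) .
  show "tlen V d i j s \<theta> > 0" using B(3) hit(1) by (simp add: T_def)
  have "Inf T \<le> t" if "t \<in> T" for t
    using that by (intro cInf_lower bdd_belowI[of _ 0]) (auto simp: T_def)
  then show "free_ray i s \<theta> (tlen V d i j s \<theta>)"
    unfolding free_ray_def hit(1)[symmetric] by (force simp: T_def)
qed

lemma bill_I:
  assumes "on_side V d i s" "\<bar>\<theta>\<bar> < pi / 2" "cos (\<beta> i j - \<theta>) \<noteq> 0" "tlen V d i j s \<theta> > 0"
    and "free_ray i s \<theta> (tlen V d i j s \<theta>)" and "on_side V d j (snew V d i j s \<theta>)"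
  shows "bill V d i j (s, \<theta>) (snew V d i j s \<theta>, \<beta> i j - \<theta>)"
proof -
  have ij: "i < d" "j < d" using assms by (auto simp: on_side_def)
  define T where "T = {t. 0 < t \<and> ray i s \<theta> t \<in> bdry V d}"
  have hit: "ray i s \<theta> (tlen V d i j s \<theta>) = xl V d j (snew V d i j s \<theta>)"
    using ray_tlen_hits_line[OF ij assms(3)] .
  have inT: "tlen V d i j s \<theta> \<in> T"
    using assms(4) hit on_side_xl_in_side[OF assms(6)] side_subset_bdry[OF ij(2)] by (auto simp: T_def)
  have "tlen V d i j s \<theta> \<le> t" if "t \<in> T" for t
    using assms(5) that by (force simp: T_def free_ray_def)
  then have "Inf T = tlen V d i j s \<theta>" by (intro cInf_eq_minimum inT)
  then show ?thesis using assms hit inT by (simp add: bill_def Let_def T_def)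
qed

lemma porbit_1_eq:
  assumes po: "porbit V d 1 n it q" and q0: "q 0 = (s, \<theta>0)" and n: "0 < n"
  shows "\<And>k. k \<le> 2*n \<Longrightarrow> q k = (sk V d it \<theta>0 s k, thk V d it \<theta>0 k)"
    and "\<And>k. k \<le> 2*n \<Longrightarrow> \<bar>thk V d it \<theta>0 k\<bar> < pi / 2"
    and "thk V d it \<theta>0 (2*n) = \<theta>0" and "sk V d it \<theta>0 s (2*n) = s"
    and "\<And>k. k < 2*n \<Longrightarrow> bill V d (it k) (it (Suc k)) (sk V d it \<theta>0 s k, thk V d it \<theta>0 k)
            (sk V d it \<theta>0 s (Suc k), thk V d it \<theta>0 (Suc k))"
proof -
  have B: "bill V d (it k) (it (Suc k)) (q k) (q (Suc k))" if "k < 2*n" for k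
    using po that by (auto simp: porbit_def bill_lam_def)
  have per: "q (2*n) = q 0" using po by (simp add: porbit_def)
  have bound: "\<bar>snd (q k)\<bar> < pi / 2" if "k \<le> 2*n" for k
  proof (cases "k < 2*n")
    case True
    then show ?thesis using B[OF True] by (simp add: bill_def)
  next
    case False
    then have "snd (q k) = snd (q 0)" using that per by (simp add: le_less)
    then show ?thesis using B[of 0] n by (simp add: bill_def)
  qed
  show q: "q k = (sk V d it \<theta>0 s k, thk V d it \<theta>0 k)" if "k \<le> 2*n" for k
    using that
  proof (induction k)
    case (Suc k)
    obtain s' t' where st: "q (Suc k) = (s', t')" by (cases "q (Suc k)")
    have "bill V d (it k) (it (Suc k)) (sk V d it \<theta>0 s k, thk V d it \<theta>0 k) (s', t')"
      using B[of k] Suc st by simp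
    moreover have "cos t' \<noteq> 0"
      using bound[OF Suc.prems] st cos_pos_of_abs_less by fastforce
    ultimately show ?case using bill_D(3,7) st by simp
  qed (simp add: q0)
  show "\<bar>thk V d it \<theta>0 k\<bar> < pi / 2" if "k \<le> 2*n" for k using q[OF that] bound[OF that] by simp
  show "thk V d it \<theta>0 (2*n) = \<theta>0" "sk V d it \<theta>0 s (2*n) = s" using q[of "2*n"] per q0 by simp_all
  show "bill V d (it k) (it (Suc k)) (sk V d it \<theta>0 s k, thk V d it \<theta>0 k)
      (sk V d it \<theta>0 s (Suc k), thk V d it \<theta>0 (Suc k))" if "k < 2*n" for k
    using B[OF that] q[of k] q[of "Suc k"] that by simp
qed

definition ray_time :: "nat \<Rightarrow> real \<Rightarrow> complex \<Rightarrow> real" where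
  "ray_time i \<theta> z = Im (cnj (ud i) * (z - V i)) / cos \<theta>"

definition ray_foot :: "nat \<Rightarrow> real \<Rightarrow> complex \<Rightarrow> real" where
  "ray_foot i \<theta> z = S0 V d i + Re (cnj (ud i) * (z - V i)) - ray_time i \<theta> z * sin \<theta>"

lemma cnj_ud_ray_diff:
  "i < d \<Longrightarrow> cnj (ud i) * (ray i s \<theta> t - V i) = of_real (s - S0 V d i) + of_real t * (\<i> * cis (- \<theta>))"
  using cnj_ud_mult_ud[of i] by (simp add: xl_def dir_def algebra_simps)

lemma ray_time_ray: "i < d \<Longrightarrow> cos \<theta> \<noteq> 0 \<Longrightarrow> ray_time i \<theta> (ray i s \<theta> t) = t"
  by (simp add: ray_time_def cnj_ud_ray_diff cis.ctr)

lemma ray_foot_ray: "i < d \<Longrightarrow> cos \<theta> \<noteq> 0 \<Longrightarrow> ray_foot i \<theta> (ray i s \<theta> t) = s"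
  by (simp add: ray_foot_def ray_time_ray cnj_ud_ray_diff cis.ctr)

lemma ray_foot_time:
  assumes i: "i < d" and c: "cos \<theta> \<noteq> 0"
  shows "ray i (ray_foot i \<theta> z) \<theta> (ray_time i \<theta> z) = z"
proof -
  have "cnj (ud i) * (ray i (ray_foot i \<theta> z) \<theta> (ray_time i \<theta> z) - V i) = cnj (ud i) * (z - V i)"
    unfolding cnj_ud_ray_diff[OF i] using c
    by (simp add: complex_eq_iff cis.ctr ray_foot_def ray_time_def)
  then show ?thesis using ud_nonzero[OF i] by simp
qed

lemma continuous_on_ray_time: "continuous_on UNIV (ray_time i \<theta>)"
  unfolding ray_time_def divide_inverse by (intro continuous_intros)

lemma continuous_on_ray_foot: "continuous_on UNIV (ray_foot i \<theta>)"
  unfolding ray_foot_def ray_time_def divide_inverse by (intro continuous_intros)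

lemma connected_side_chain:
  assumes i: "i < d" and m: "m < d" "m \<noteq> i" "m \<noteq> j"
  obtains C where "connected C" "side V d m \<subseteq> C"
    "\<forall>z\<in>C. \<exists>r<d. r \<noteq> i \<and> r \<noteq> j \<and> z \<in> side V d r" "C \<inter> (side V d i \<union> side V d j) \<noteq> {}"
proof -
  define r where "r k = (m + k) mod d" for k
  define C where "C K = (\<Union>k<K. side V d (r k))" for K
  have r_less: "r k < d" for k using three_le_d by (simp add: r_def)
  have nxt_r: "nxt d (r k) = r (Suc k)" for k by (simp add: r_def nxt_def mod_Suc_eq)
  have V_in_side: "V (r (Suc k)) \<in> side V d (r k)" for k
    using nxt_r[of k] by (simp add: side_def)
  have C_Suc: "connected (C (Suc K)) \<and> V (r (Suc K)) \<in> C (Suc K)" for K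
  proof (induction K)
    case 0
    then show ?case using V_in_side[of 0] by (simp add: C_def lessThan_Suc side_def connected_segment)
  next
    case (Suc K)
    have e: "C (Suc (Suc K)) = C (Suc K) \<union> side V d (r (Suc K))"
      by (simp add: C_def lessThan_Suc Un_commute)
    have "V (r (Suc K)) \<in> side V d (r (Suc K))" by (simp add: side_def)
    then have "connected (C (Suc (Suc K)))" unfolding e using Suc.IH
      by (intro connected_Un) (auto simp: side_def)
    moreover have "V (r (Suc (Suc K))) \<in> C (Suc (Suc K))" unfolding e using V_in_side[of "Suc K"] by simp
    ultimately show ?case by simp
  qed
  define P where "P k \<longleftrightarrow> r k = i \<or> r k = j" for k
  define K where "K = (LEAST k. P k)"
  have "P (i + d - m)" using m i by (simp add: P_def r_def)
  then have PK: "P K" unfolding K_def by (rule LeastI)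
  have not_P: "k < K \<Longrightarrow> \<not> P k" for k unfolding K_def by (rule not_less_Least)
  have "K \<noteq> 0"
  proof
    assume "K = 0"
    then show False using PK m by (simp add: P_def r_def)
  qed
  then obtain K' where K': "K = Suc K'" by (cases K) auto
  show ?thesis
  proof
    show "connected (C K)" using C_Suc[of K'] K' by simp
    have "r 0 = m" using m by (simp add: r_def)
    then show "side V d m \<subseteq> C K" unfolding C_def using \<open>K \<noteq> 0\<close> by blast
    show "\<forall>z\<in>C K. \<exists>r<d. r \<noteq> i \<and> r \<noteq> j \<and> z \<in> side V d r"
      using not_P r_less by (auto simp: C_def P_def)
    show "C K \<inter> (side V d i \<union> side V d j) \<noteq> {}"
      using C_Suc[of K'] K' PK by (auto simp: P_def side_def)
  qed
qed

end

section \<open>Rays between two billiard chords\<close>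

locale chord_pair = ccw_polygon +
  fixes i j :: nat and \<theta> sa sb sa' sb' :: real
  assumes bill_a: "bill V d i j (sa, \<theta>) (sa', \<beta> i j - \<theta>)"
    and bill_b: "bill V d i j (sb, \<theta>) (sb', \<beta> i j - \<theta>)"
    and out_angle: "\<bar>\<beta> i j - \<theta>\<bar> < pi / 2"
begin

lemma cos_out_pos: "cos (\<beta> i j - \<theta>) > 0"
  using cos_pos_of_abs_less[OF out_angle] .

lemmas chord_a = bill_D[OF bill_a cos_out_pos[THEN less_imp_neq, symmetric]]
lemmas chord_b = bill_D[OF bill_b cos_out_pos[THEN less_imp_neq, symmetric]]

lemma ij: "i < d" "j < d"
  using chord_a by simp_all

lemma cos_pos: "cos \<theta> > 0"
  using cos_pos_of_abs_less chord_a(4) .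

abbreviation len :: "real \<Rightarrow> real" where "len s \<equiv> tlen V d i j s \<theta>"

text \<open>In the oblique coordinates (foot on side \<open>i\<close>, time along direction \<open>\<theta>\<close>): the open
  quadrilateral bounded by the two chords, side \<open>i\<close> and the line of side \<open>j\<close>.\<close>

definition strip :: "complex set" where
  "strip = {z. min sa sb < ray_foot i \<theta> z \<and> ray_foot i \<theta> z < max sa sb \<and>
                0 < ray_time i \<theta> z \<and> ray_time i \<theta> z < len (ray_foot i \<theta> z)}"

definition strip_exterior :: "complex set" where
  "strip_exterior = {z. ray_foot i \<theta> z < min sa sb \<or> max sa sb < ray_foot i \<theta> z \<or>
                      ray_time i \<theta> z < 0 \<or> len (ray_foot i \<theta> z) < ray_time i \<theta> z}"

lemma continuous_on_len_ray_foot: "continuous_on UNIV (\<lambda>z. len (ray_foot i \<theta> z))"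
proof -
  obtain p q where "\<forall>s. len s = p + q * s" using tlen_affine[OF ij] by blast
  then show ?thesis by (simp add: continuous_intros continuous_on_ray_foot)
qed

lemma open_strip: "open strip"
  unfolding strip_def
  by (intro open_Collect_conj open_Collect_less continuous_on_ray_foot continuous_on_ray_time
      continuous_on_len_ray_foot continuous_on_const)

lemma open_strip_exterior: "open strip_exterior"
  unfolding strip_exterior_def
  by (intro open_Collect_disj open_Collect_less continuous_on_ray_foot continuous_on_ray_time
      continuous_on_len_ray_foot continuous_on_const)

lemma snew_between:
  assumes "min sa sb \<le> s" "s \<le> max sa sb"
  shows "min sa' sb' \<le> snew V d i j s \<theta> \<and> snew V d i j s \<theta> \<le> max sa' sb'"
proof -
  obtain p q where "\<forall>s. snew V d i j s \<theta> = p + q * s" using snew_affine[OF ij] by blast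
  then show ?thesis using affine_between[OF assms, of p q] chord_a(7) chord_b(7) by simp
qed

lemma between_of_snew_between:
  assumes "min sa' sb' < snew V d i j s \<theta>" "snew V d i j s \<theta> < max sa' sb'"
  shows "min sa sb < s \<and> s < max sa sb"
proof -
  obtain p q where "\<forall>s. snew V d i j s \<theta> = p + q * s" using snew_affine[OF ij] by blast
  then show ?thesis using between_of_affine_between[of p q sa sb s] assms chord_a(7) chord_b(7) by simp
qed

lemma len_pos_between:
  assumes "min sa sb \<le> s" "s \<le> max sa sb"
  shows "len s > 0"
proof -
  obtain p q where "\<forall>s. len s = p + q * s" using tlen_affine[OF ij] by blast
  then show ?thesis using affine_between[OF assms, of p q] chord_a(8) chord_b(8)
    by (simp add: min_def split: if_splits)
qed

lemma ray_in_strip: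
  "min sa sb < s \<Longrightarrow> s < max sa sb \<Longrightarrow> 0 < t \<Longrightarrow> t < len s \<Longrightarrow> ray i s \<theta> t \<in> strip"
  using ray_time_ray[OF ij(1)] ray_foot_ray[OF ij(1)] cos_pos by (simp add: strip_def)

lemma side_i_disjoint_strip: "side V d i \<inter> strip = {}"
proof -
  have "ray_time i \<theta> (xl V d i s) = 0" for s
    using ray_time_ray[OF ij(1), of \<theta> s 0] cos_pos by simp
  then show ?thesis using side_xl_param[OF ij(1)] by (force simp: strip_def)
qed

lemma side_j_disjoint_strip: "side V d j \<inter> strip = {}"
proof -
  have "ray_time i \<theta> z = len (ray_foot i \<theta> z)" if z: "z \<in> side V d j" for z
  proof -
    obtain s where "z = xl V d j s" using side_xl_param[OF ij(2) z] by blast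
    then show ?thesis
      using ray_hits_line_unique(1)[OF ij cos_out_pos[THEN less_imp_neq, symmetric]]
        ray_foot_time[OF ij(1)] cos_pos by (metis less_irrefl)
  qed
  then show ?thesis by (auto simp: strip_def)
qed

text \<open>A point of another side that is neither in the open strip nor in its open exterior lies
  on its frontier, i.e. on side \<open>i\<close>, on side \<open>j\<close>, or on one of the two chords; none of these
  meets another side, the chords because their interiors are free.\<close>

lemma other_side_subset:
  assumes r: "r < d" "r \<noteq> i" "r \<noteq> j"
  shows "side V d r \<subseteq> strip \<union> strip_exterior"
proof
  fix z assume z: "z \<in> side V d r"
  define \<sigma> \<tau> where "\<sigma> = ray_foot i \<theta> z" and "\<tau> = ray_time i \<theta> z"
  have z_eq: "z = ray i \<sigma> \<theta> \<tau>"
    unfolding \<sigma>_def \<tau>_def using ray_foot_time[OF ij(1)] cos_pos by simp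
  show "z \<in> strip \<union> strip_exterior"
  proof (rule ccontr)
    assume "z \<notin> strip \<union> strip_exterior"
    then have bnd: "min sa sb \<le> \<sigma>" "\<sigma> \<le> max sa sb" "0 \<le> \<tau>" "\<tau> \<le> len \<sigma>"
      and not_in: "\<not> (min sa sb < \<sigma> \<and> \<sigma> < max sa sb \<and> 0 < \<tau> \<and> \<tau> < len \<sigma>)"
      by (auto simp: strip_def strip_exterior_def \<sigma>_def \<tau>_def)
    have z_bdry: "z \<in> bdry V d" using z side_subset_bdry[OF r(1)] by blast
    have on_i: "on_side V d i \<sigma>" using on_side_convex[OF chord_a(5) chord_b(5) bnd(1,2)] .
    consider "\<tau> = 0" | "\<tau> = len \<sigma>" | "0 < \<tau>" "\<tau> < len \<sigma>"
      using bnd by linarith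
    then show False
    proof cases
      case 1
      then show False using on_side_not_in_other_side[OF on_i r(1,2)] z z_eq by simp
    next
      case 2
      have "on_side V d j (snew V d i j \<sigma> \<theta>)"
        using snew_between[OF bnd(1,2)] on_side_convex[OF chord_a(6) chord_b(6)] by blast
      moreover have "z = xl V d j (snew V d i j \<sigma> \<theta>)"
        using 2 z_eq ray_tlen_hits_line[OF ij cos_out_pos[THEN less_imp_neq, symmetric]] by simp
      ultimately show False using on_side_not_in_other_side[OF _ r(1,3)] z by blast
    next
      case 3
      then have "\<sigma> = sa \<or> \<sigma> = sb"
        using bnd not_in by (cases "sa \<le> sb") (auto simp: min_def max_def)
      then show False using 3 chord_a(9) chord_b(9) z_eq z_bdry by (auto simp: free_ray_def)
    qed
  qed
qed

text \<open>Simple connectivity enters here: the sides other than \<open>i\<close> and \<open>j\<close> that could reach the strip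
  are linked by a connected chain to side \<open>i\<close> or \<open>j\<close>, which lie outside the strip.\<close>

lemma strip_Int_bdry: "strip \<inter> bdry V d = {}"
proof (rule ccontr)
  assume "strip \<inter> bdry V d \<noteq> {}"
  then obtain z m where z: "z \<in> strip" "m < d" "z \<in> side V d m" by (auto simp: bdry_def)
  have "m \<noteq> i" "m \<noteq> j" using z side_i_disjoint_strip side_j_disjoint_strip by blast+
  then obtain C where C: "connected C" "side V d m \<subseteq> C"
      "\<forall>z\<in>C. \<exists>r<d. r \<noteq> i \<and> r \<noteq> j \<and> z \<in> side V d r" "C \<inter> (side V d i \<union> side V d j) \<noteq> {}"
    using connected_side_chain[OF ij(1) z(2)] by blast
  have C_sub: "C \<subseteq> strip \<union> strip_exterior" using C(3) other_side_subset by blast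
  have disj: "strip \<inter> strip_exterior \<inter> C = {}" by (auto simp: strip_def strip_exterior_def)
  have "strip_exterior \<inter> C \<noteq> {}"
    using C(4) C_sub side_i_disjoint_strip side_j_disjoint_strip by blast
  moreover have "strip \<inter> C \<noteq> {}" using z C(2) by blast
  ultimately show False using connectedD[OF C(1) open_strip open_strip_exterior disj C_sub] by blast
qed

text \<open>Each point of the ray before it lands is a convex combination of its foot and of its landing
  point, both on the closure of the strip, with positive weight on the latter.\<close>

lemma free_ray_between_chords:
  assumes s: "min sa sb < s" "s < max sa sb"
    and c2: "cos (\<beta> i j - \<theta>2) \<noteq> 0"
    and s2: "min sa' sb' < snew V d i j s \<theta>2" "snew V d i j s \<theta>2 < max sa' sb'"
  shows "free_ray i s \<theta>2 (tlen V d i j s \<theta>2)"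
  unfolding free_ray_def
proof (intro allI impI)
  fix t assume t: "0 < t" "t < tlen V d i j s \<theta>2"
  define T2 s2' where "T2 = tlen V d i j s \<theta>2" and "s2' = snew V d i j s \<theta>2"
  have hit2: "ray i s \<theta>2 T2 = xl V d j s2'"
    unfolding T2_def s2'_def by (rule ray_tlen_hits_line[OF ij c2])
  define \<sigma>2 \<tau>2 where "\<sigma>2 = ray_foot i \<theta> (xl V d j s2')" and "\<tau>2 = ray_time i \<theta> (xl V d j s2')"
  have e2: "ray i \<sigma>2 \<theta> \<tau>2 = xl V d j s2'"
    unfolding \<sigma>2_def \<tau>2_def using ray_foot_time[OF ij(1)] cos_pos by simp
  note hit = ray_hits_line_unique[OF ij cos_out_pos[THEN less_imp_neq, symmetric] e2]
  have \<sigma>2: "min sa sb < \<sigma>2 \<and> \<sigma>2 < max sa sb"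
    using between_of_snew_between s2 hit(2) by (simp add: s2'_def)
  have \<tau>2: "\<tau>2 > 0" using hit(1) len_pos_between \<sigma>2 by simp
  define \<nu> where "\<nu> = t / T2"
  have \<nu>: "0 < \<nu>" "\<nu> < 1" "t = \<nu> * T2" using t by (auto simp: \<nu>_def T2_def)
  have "of_real T2 * dir V d i \<theta>2 = xl V d j s2' - xl V d i s"
    using hit2 by (simp add: algebra_simps)
  then have "ray i s \<theta>2 t = xl V d i s + of_real \<nu> * (xl V d j s2' - xl V d i s)"
    by (simp add: \<nu>(3) mult.assoc)
  also have "\<dots> = (1 - of_real \<nu>) * xl V d i s + of_real \<nu> * ray i \<sigma>2 \<theta> \<tau>2"
    using e2 by (simp add: algebra_simps)
  also have "\<dots> = ray i ((1 - \<nu>) * s + \<nu> * \<sigma>2) \<theta> (\<nu> * \<tau>2)"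
    unfolding xl_convex by (simp add: algebra_simps)
  finally have pt: "ray i s \<theta>2 t = ray i ((1 - \<nu>) * s + \<nu> * \<sigma>2) \<theta> (\<nu> * \<tau>2)" .
  have between: "min sa sb < (1 - \<nu>) * s + \<nu> * \<sigma>2 \<and> (1 - \<nu>) * s + \<nu> * \<sigma>2 < max sa sb"
    using convex_comb_between[of "min sa sb" s "max sa sb" \<sigma>2 \<nu>] s \<sigma>2 \<nu> by simp
  obtain p q where pq: "\<forall>s. len s = p + q * s" using tlen_affine[OF ij] by blast
  have "len ((1 - \<nu>) * s + \<nu> * \<sigma>2) = (1 - \<nu>) * len s + \<nu> * \<tau>2"
    using pq hit(1) by (simp add: algebra_simps)
  moreover have "(1 - \<nu>) * len s > 0" using \<nu> len_pos_between s by simp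
  ultimately have "ray i s \<theta>2 t \<in> strip"
    unfolding pt using between \<nu> \<tau>2 by (intro ray_in_strip) auto
  then show "ray i s \<theta>2 t \<notin> bdry V d" using strip_Int_bdry by blast
qed

lemma bill_between_chords:
  assumes s: "min sa sb < s" "s < max sa sb"
    and \<theta>2: "\<bar>\<theta>2\<bar> < pi / 2" and c2: "cos (\<beta> i j - \<theta>2) \<noteq> 0" and T: "tlen V d i j s \<theta>2 > 0"
    and s2: "min sa' sb' < snew V d i j s \<theta>2" "snew V d i j s \<theta>2 < max sa' sb'"
  shows "bill V d i j (s, \<theta>2) (snew V d i j s \<theta>2, \<beta> i j - \<theta>2)"
proof (rule bill_I[OF _ \<theta>2 c2 T])
  show "on_side V d i s" using on_side_convex[OF chord_a(5) chord_b(5)] s by simp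
  show "on_side V d j (snew V d i j s \<theta>2)" using on_side_convex[OF chord_a(6) chord_b(6)] s2 by simp
  show "free_ray i s \<theta>2 (tlen V d i j s \<theta>2)" using free_ray_between_chords[OF s c2 s2] .
qed

end

section \<open>Collision angles and foot points along the itinerary\<close>

lemma sum_real_lessThan_double: "(\<Sum>j<K. real j) * 2 = real K * (real K - 1)"
  by (induction K) (simp_all add: algebra_simps)

lemma sum_powers_has_derivative_at_1:
  "((\<lambda>x::real. \<Sum>j<K. x ^ j) has_real_derivative (\<Sum>j<K. real j)) (at 1)"
  using DERIV_sum[OF DERIV_pow, of "\<lambda>j. j" "{..<K}" 1] by simp

locale cylinder = ccw_polygon +
  fixes n :: nat and it :: "nat \<Rightarrow> nat" and \<theta>0 :: real
  assumes two_le_n: "2 \<le> n" and it_less: "\<And>k. it k < d"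
    and \<theta>0_eq: "\<theta>0 = (1 / (2 * real n)) *
          (\<Sum>k<2*n. (-1) ^ (k+1) * real k * beta V d (it k) (it (Suc k)))"
    and \<theta>_period: "thk V d it \<theta>0 (2*n) = \<theta>0"
    and \<theta>_bound: "\<And>k. k \<le> 2*n \<Longrightarrow> \<bar>thk V d it \<theta>0 k\<bar> < pi / 2"
begin

abbreviation \<beta>s :: "nat \<Rightarrow> real" where "\<beta>s k \<equiv> \<beta> (it k) (it (Suc k))"
abbreviation \<theta>s :: "nat \<Rightarrow> real" where "\<theta>s k \<equiv> thk V d it \<theta>0 k"
abbreviation \<Omega>0 :: real where "\<Omega>0 \<equiv> Omega0 V d n it"
abbreviation sks :: "real \<Rightarrow> nat \<Rightarrow> real" where "sks s k \<equiv> sk V d it \<theta>0 s k"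

definition \<gamma> :: "nat \<Rightarrow> real" where "\<gamma> m = (-1) ^ m * \<beta>s m"

lemma n_pos: "real n > 0"
  using two_le_n by simp

lemma cos_\<theta>s_pos: "k \<le> 2*n \<Longrightarrow> cos (\<theta>s k) > 0"
  using \<theta>_bound cos_pos_of_abs_less by blast

lemma alt_\<theta>s_eq: "(-1) ^ m * \<theta>s m = \<theta>0 - (\<Sum>k<m. \<gamma> k)"
  by (induction m) (simp_all add: \<gamma>_def algebra_simps)

lemma sum_\<gamma>: "(\<Sum>k<2*n. \<gamma> k) = 0"
  using alt_\<theta>s_eq[of "2*n"] \<theta>_period by simp

lemma sum_\<gamma>_times_index: "(\<Sum>k<2*n. \<gamma> k * real k) = - (2 * real n * \<theta>0)"
proof -
  have "(\<Sum>k<2*n. (-1) ^ (k+1) * real k * \<beta>s k) = - (\<Sum>k<2*n. \<gamma> k * real k)"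
    by (simp add: \<gamma>_def sum_negf[symmetric] algebra_simps)
  then show ?thesis using \<theta>0_eq n_pos by (simp add: field_simps)
qed

lemma Omega0_eq: "\<Omega>0 = - (1 / (4 * real n)) * (\<Sum>k<2*n. \<gamma> k * real k * (2 * real n - real k))"
proof -
  have "(\<Sum>k<2*n. (-1) ^ (k+1) * real k * real (2*n - k) * \<beta>s k)
      = - (\<Sum>k<2*n. \<gamma> k * real k * (2 * real n - real k))"
    unfolding sum_negf[symmetric] by (rule sum.cong) (auto simp: \<gamma>_def of_nat_diff algebra_simps)
  then show ?thesis by (simp add: Omega0_def)
qed

text \<open>The paper's \<open>\<theta>\<^sub>0(\<lambda>) = (\<Sum>\<^sub>k (-\<lambda>)\<^bsup>2n-k\<^esup> \<beta>\<^sub>k) / (\<lambda>\<^bsup>2n\<^esup> - 1)\<close> with the factor \<open>\<lambda> - 1\<close>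
  cancelled, which makes it smooth at \<open>\<lambda> = 1\<close>.\<close>

definition theta0_num :: "real \<Rightarrow> real" where
  "theta0_num x = (\<Sum>m<2*n. \<gamma> m * (\<Sum>j<2*n-m. x ^ j))"

definition theta0_den :: "real \<Rightarrow> real" where
  "theta0_den x = (\<Sum>j<2*n. x ^ j)"

definition theta0_lam :: "real \<Rightarrow> real" where
  "theta0_lam x = theta0_num x / theta0_den x"

fun theta_lam :: "real \<Rightarrow> nat \<Rightarrow> real" where
  "theta_lam x 0 = theta0_lam x"
| "theta_lam x (Suc k) = x * (\<beta>s k - theta_lam x k)"

fun s_lam :: "real \<Rightarrow> real \<Rightarrow> nat \<Rightarrow> real" where
  "s_lam x s 0 = s"
| "s_lam x s (Suc k) = snew V d (it k) (it (Suc k)) (s_lam x s k) (theta_lam x k)"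

lemma theta0_den_1: "theta0_den 1 = 2 * real n"
  by (simp add: theta0_den_def)

lemma theta0_num_1: "theta0_num 1 = 2 * real n * \<theta>0"
proof -
  have "theta0_num 1 = (\<Sum>m<2*n. \<gamma> m * (2 * real n - real m))"
    unfolding theta0_num_def by (rule sum.cong) (auto simp: of_nat_diff)
  also have "\<dots> = 2 * real n * (\<Sum>m<2*n. \<gamma> m) - (\<Sum>m<2*n. \<gamma> m * real m)"
    by (simp add: sum_distrib_left sum_subtractf algebra_simps)
  finally show ?thesis using sum_\<gamma> sum_\<gamma>_times_index by simp
qed

lemma theta0_lam_1: "theta0_lam 1 = \<theta>0"
  using n_pos by (simp add: theta0_lam_def theta0_num_1 theta0_den_1)

lemma theta_lam_1: "theta_lam 1 k = \<theta>s k"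
  by (induction k) (simp_all add: theta0_lam_1)

lemma s_lam_1: "s_lam 1 s k = sks s k"
  by (induction k) (simp_all add: theta_lam_1)

lemma alt_theta_lam_eq: "(-1) ^ k * theta_lam x k = x ^ k * theta0_lam x - (\<Sum>m<k. \<gamma> m * x ^ (k - m))"
proof (induction k)
  case (Suc k)
  have "(-1) ^ Suc k * theta_lam x (Suc k) = - x * \<gamma> k + x * ((-1) ^ k * theta_lam x k)"
    by (simp add: \<gamma>_def algebra_simps)
  also have "\<dots> = - x * \<gamma> k + x * (x ^ k * theta0_lam x - (\<Sum>m<k. \<gamma> m * x ^ (k - m)))"
    using Suc.IH by simp
  also have "\<dots> = x ^ Suc k * theta0_lam x - (\<Sum>m<Suc k. \<gamma> m * x ^ (Suc k - m))"
  proof -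
    have "(\<Sum>m<k. \<gamma> m * x ^ (Suc k - m)) = x * (\<Sum>m<k. \<gamma> m * x ^ (k - m))"
      by (simp add: sum_distrib_left Suc_diff_le algebra_simps)
    then show ?thesis by (simp add: algebra_simps)
  qed
  finally show ?case .
qed simp

text \<open>This is where the choice of \<open>\<theta>\<^sub>0(\<lambda>)\<close> enters.\<close>

lemma theta_lam_period:
  assumes x: "x > 0"
  shows "theta_lam x (2*n) = theta_lam x 0"
proof -
  have den_pos: "theta0_den x > 0"
    unfolding theta0_den_def using two_le_n x by (intro sum_pos) (auto simp: lessThan_empty_iff)
  have "(x ^ (2*n) - 1) * theta0_lam x = (x - 1) * theta0_num x"
    using den_pos by (simp add: theta0_lam_def theta0_den_def power_diff_1_eq)
  also have "\<dots> = (\<Sum>m<2*n. (x - 1) * (\<gamma> m * (\<Sum>j<2*n-m. x ^ j)))"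
    unfolding theta0_num_def by (rule sum_distrib_left)
  also have "\<dots> = (\<Sum>m<2*n. \<gamma> m * (x ^ (2*n - m) - 1))"
    by (rule sum.cong) (simp_all add: power_diff_1_eq mult_ac)
  also have "\<dots> = (\<Sum>m<2*n. \<gamma> m * x ^ (2*n - m))"
    using sum_\<gamma> by (simp add: sum_subtractf algebra_simps)
  finally show ?thesis using alt_theta_lam_eq[of "2*n" x] by (simp add: algebra_simps)
qed

lemma theta0_lam_has_derivative: "(theta0_lam has_real_derivative \<Omega>0) (at 1)"
proof -
  define K where "K m = 2 * real n - real m" for m
  define S0 S1 S2 where "S0 = (\<Sum>m<2*n. \<gamma> m * K m)"
    and "S1 = (\<Sum>m<2*n. \<gamma> m * (K m * (K m - 1) / 2))" and "S2 = (\<Sum>m<2*n. \<gamma> m * real m * K m)"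
  have "(\<Sum>j<2*n-m. real j) = K m * (K m - 1) / 2" if "m < 2*n" for m
    using sum_real_lessThan_double[of "2*n-m"] that by (simp add: K_def of_nat_diff)
  then have "(\<Sum>m<2*n. \<gamma> m * (\<Sum>j<2*n-m. real j)) = S1"
    unfolding S1_def by (intro sum.cong) simp_all
  moreover have "(theta0_num has_real_derivative (\<Sum>m<2*n. \<gamma> m * (\<Sum>j<2*n-m. real j))) (at 1)"
    unfolding theta0_num_def[abs_def] by (intro DERIV_sum DERIV_cmult sum_powers_has_derivative_at_1)
  ultimately have num: "(theta0_num has_real_derivative S1) (at 1)" by simp
  have "(\<Sum>j<2*n. real j) = real n * (2 * real n - 1)"
    using sum_real_lessThan_double[of "2*n"] by (simp add: algebra_simps)
  then have den: "(theta0_den has_real_derivative real n * (2 * real n - 1)) (at 1)"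
    using sum_powers_has_derivative_at_1[of "2*n"] unfolding theta0_den_def[abs_def] by simp
  have "theta0_num 1 = S0"
    unfolding theta0_num_def S0_def by (rule sum.cong) (auto simp: K_def of_nat_diff)
  then have quot: "(theta0_lam has_real_derivative
      (S1 * (2 * real n) - S0 * (real n * (2 * real n - 1))) / (2 * real n * (2 * real n))) (at 1)"
    unfolding theta0_lam_def[abs_def] using DERIV_divide[OF num den] theta0_den_1 n_pos by simp
  have "S1 * 2 - S0 * (2 * real n - 1) + S2 = 0"
    unfolding S0_def S1_def S2_def sum_distrib_right sum_subtractf[symmetric] sum.distrib[symmetric]
    by (rule sum.neutral) (auto simp: K_def field_simps)
  then have S1: "S1 = (S0 * (2 * real n - 1) - S2) / 2" by simp
  have \<Omega>0: "\<Omega>0 = - S2 / (4 * real n)"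
    unfolding Omega0_eq S2_def K_def by simp
  have "(S1 * (2 * real n) - S0 * (real n * (2 * real n - 1))) / (2 * real n * (2 * real n)) = \<Omega>0"
    unfolding S1 \<Omega>0 using n_pos by (simp add: field_simps)
  then show ?thesis using quot by simp
qed

fun theta_lam_deriv :: "nat \<Rightarrow> real" where
  "theta_lam_deriv 0 = \<Omega>0"
| "theta_lam_deriv (Suc k) = \<beta>s k - \<theta>s k - theta_lam_deriv k"

definition seg :: "real \<Rightarrow> nat \<Rightarrow> real" where
  "seg s m = tlen V d (it m) (it (Suc m)) (sks s m) (\<theta>s m)"

fun s_lam_deriv :: "real \<Rightarrow> nat \<Rightarrow> real" where
  "s_lam_deriv s 0 = 0"
| "s_lam_deriv s (Suc k) =
     - (cos (\<theta>s k) / cos (\<theta>s (Suc k))) * s_lam_deriv s k - (seg s k / cos (\<theta>s (Suc k))) * theta_lam_deriv k"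

lemma theta_lam_has_derivative: "((\<lambda>x. theta_lam x k) has_real_derivative theta_lam_deriv k) (at 1)"
proof (induction k)
  case 0
  then show ?case using theta0_lam_has_derivative by simp
next
  case (Suc k)
  have "((\<lambda>x. x * (\<beta>s k - theta_lam x k)) has_real_derivative
      1 * (\<beta>s k - theta_lam 1 k) + (0 - theta_lam_deriv k) * 1) (at 1)"
    by (intro DERIV_mult DERIV_ident DERIV_diff DERIV_const Suc.IH)
  then show ?case by (simp add: theta_lam_1)
qed

lemma s_lam_has_derivative:
  "k \<le> 2*n \<Longrightarrow> ((\<lambda>x. s_lam x s k) has_real_derivative s_lam_deriv s k) (at 1)"
proof (induction k)
  case (Suc k)
  have c: "cos (\<beta>s k - \<theta>s k) \<noteq> 0"
    using cos_\<theta>s_pos[OF Suc.prems] by simp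
  have "((\<lambda>x. snew V d (it k) (it (Suc k)) (s_lam x s k) (theta_lam x k)) has_real_derivative
     - (cos (\<theta>s k) / cos (\<beta>s k - \<theta>s k)) * s_lam_deriv s k
      - (tlen V d (it k) (it (Suc k)) (s_lam 1 s k) (\<theta>s k) / cos (\<beta>s k - \<theta>s k)) * theta_lam_deriv k) (at 1)"
    using Suc it_less
    by (intro snew_has_real_derivative[OF _ _ c] theta_lam_has_derivative theta_lam_1) auto
  then show ?case by (simp add: s_lam_1 seg_def)
qed simp

lemma alt_s_lam_deriv_eq:
  "k \<le> 2*n \<Longrightarrow> (-1) ^ k * cos (\<theta>s k) * s_lam_deriv s k = (\<Sum>m<k. (-1) ^ m * seg s m * theta_lam_deriv m)"
proof (induction k)
  case (Suc k)
  have "cos (\<theta>s (Suc k)) \<noteq> 0" using cos_\<theta>s_pos[OF Suc.prems] by simp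
  then have "(-1) ^ Suc k * cos (\<theta>s (Suc k)) * s_lam_deriv s (Suc k)
      = (-1) ^ k * cos (\<theta>s k) * s_lam_deriv s k + (-1) ^ k * seg s k * theta_lam_deriv k"
    by (simp add: field_simps)
  then show ?case using Suc by simp
qed simp

definition alt_theta_sum :: "nat \<Rightarrow> real" where
  "alt_theta_sum m = (\<Sum>p\<in>{1..m}. (-1) ^ p * \<theta>s p)"

lemma alt_theta_sum_Suc: "alt_theta_sum (Suc m) = alt_theta_sum m + (-1) ^ Suc m * \<theta>s (Suc m)"
  by (simp add: alt_theta_sum_def)

lemma alt_theta_lam_deriv_eq: "(-1) ^ m * theta_lam_deriv m = \<Omega>0 + alt_theta_sum m"
  by (induction m) (simp_all add: alt_theta_sum_def algebra_simps)

lemma alt_theta_sum_period: "alt_theta_sum (2*n) = 0"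
proof -
  have "(\<Sum>p\<in>{1..M}. \<Sum>k<p. \<gamma> k) = (\<Sum>k<M. \<gamma> k * (real M - real k))" for M
    by (induction M) (simp_all add: sum.distrib[symmetric] algebra_simps)
  then have "(\<Sum>p\<in>{1..2*n}. \<Sum>k<p. \<gamma> k) = 2 * real n * (\<Sum>k<2*n. \<gamma> k) - (\<Sum>k<2*n. \<gamma> k * real k)"
    by (simp add: sum_distrib_left sum_subtractf algebra_simps)
  moreover have "alt_theta_sum (2*n) = (\<Sum>p\<in>{1..2*n}. \<theta>0 - (\<Sum>k<p. \<gamma> k))"
    unfolding alt_theta_sum_def by (rule sum.cong) (simp_all add: alt_\<theta>s_eq)
  ultimately show ?thesis using sum_\<gamma> sum_\<gamma>_times_index by (simp add: sum_subtractf)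
qed

lemma Lk_Suc: "Lk V d it \<theta>0 s (Suc k) = Lk V d it \<theta>0 s k + seg s k"
  by (simp add: Lk_def seg_def)

text \<open>Summation by parts.\<close>

lemma sum_seg_alt_theta_sum:
  "(\<Sum>m<k. seg s m * alt_theta_sum m)
     = Lk V d it \<theta>0 s k * alt_theta_sum k - (\<Sum>p\<in>{1..k}. (-1) ^ p * \<theta>s p * Lk V d it \<theta>0 s p)"
proof (induction k)
  case (Suc k)
  then show ?case by (simp add: Lk_Suc alt_theta_sum_Suc algebra_simps)
qed (simp add: Lk_def alt_theta_sum_def)

lemma s_lam_deriv_period:
  "s_lam_deriv s (2*n) * cos \<theta>0 = \<Omega>0 * Lk V d it \<theta>0 s (2*n)
     - (\<Sum>k=1..2*n. (-1) ^ k * thk V d it \<theta>0 (k mod (2*n)) * Lk V d it \<theta>0 s k)"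
proof -
  have "s_lam_deriv s (2*n) * cos \<theta>0 = (\<Sum>m<2*n. (-1) ^ m * seg s m * theta_lam_deriv m)"
    using alt_s_lam_deriv_eq[of "2*n" s] \<theta>_period by (simp add: mult.commute)
  also have "\<dots> = (\<Sum>m<2*n. seg s m * (\<Omega>0 + alt_theta_sum m))"
    by (rule sum.cong) (simp_all add: alt_theta_lam_deriv_eq[symmetric] algebra_simps)
  also have "\<dots> = \<Omega>0 * Lk V d it \<theta>0 s (2*n) + (\<Sum>m<2*n. seg s m * alt_theta_sum m)"
    by (simp add: algebra_simps sum.distrib sum_distrib_left Lk_def seg_def)
  also have "\<dots> = \<Omega>0 * Lk V d it \<theta>0 s (2*n) - (\<Sum>p\<in>{1..2*n}. (-1) ^ p * \<theta>s p * Lk V d it \<theta>0 s p)"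
    using sum_seg_alt_theta_sum[of s "2*n"] alt_theta_sum_period by simp
  also have "(\<Sum>p\<in>{1..2*n}. (-1) ^ p * \<theta>s p * Lk V d it \<theta>0 s p)
      = (\<Sum>k=1..2*n. (-1) ^ k * thk V d it \<theta>0 (k mod (2*n)) * Lk V d it \<theta>0 s k)"
    by (rule sum.cong) (use \<theta>_period in \<open>auto simp: le_less\<close>)
  finally show ?thesis .
qed

lemma s_lam_affine: "s_lam x s k = s_lam x 0 k + s * (s_lam x 1 k - s_lam x 0 k)"
proof (induction k arbitrary: s)
  case (Suc k)
  obtain p q where "\<forall>z. snew V d (it k) (it (Suc k)) z (theta_lam x k) = p + q * z"
    using snew_affine it_less by blast
  then have e: "\<And>z. s_lam x z (Suc k) = p + q * s_lam x z k" by simp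
  show ?case unfolding e Suc.IH[of s] by (simp add: algebra_simps)
qed simp

lemma sk_affine: "sks s k = sks 0 k + s * (sks 1 k - sks 0 k)"
  using s_lam_affine[of 1 s k] by (simp add: s_lam_1)

text \<open>The factor \<open>(-1)\<^sup>k cos \<theta>\<^sub>k\<close> turns the derivative \<open>-cos \<theta>\<^sub>k / cos \<theta>\<^sub>k\<^sub>+\<^sub>1\<close> of one step
  into an invariant.\<close>

lemma alt_sk_diff:
  "k \<le> 2*n \<Longrightarrow> (-1) ^ k * cos (\<theta>s k) * (sks y k - sks x k) = cos \<theta>0 * (y - x)"
proof (induction k)
  case (Suc k)
  have c: "cos (\<theta>s (Suc k)) \<noteq> 0" using cos_\<theta>s_pos[OF Suc.prems] by simp
  have "sks y (Suc k) - sks x (Suc k)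
      = - (sks y k - sks x k) * cos (\<theta>s k) / cos (\<theta>s (Suc k))"
    using snew_diff it_less c by simp
  then have "(-1) ^ Suc k * cos (\<theta>s (Suc k)) * (sks y (Suc k) - sks x (Suc k))
      = (-1) ^ k * cos (\<theta>s k) * (sks y k - sks x k)"
    using c by (simp only:) (simp add: field_simps)
  then show ?case using Suc by simp
qed simp

lemma Lk_period_indep: "Lk V d it \<theta>0 y (2*n) = Lk V d it \<theta>0 x (2*n)"
proof -
  define K where "K = cos \<theta>0 * (y - x)"
  have seg_diff: "seg y m - seg x m = - K * ((-1) ^ m * (tan (\<theta>s m) + tan (\<theta>s (Suc m))))"
    if m: "m < 2*n" for m
  proof -
    have c: "cos (\<theta>s m) > 0" "cos (\<theta>s (Suc m)) > 0" using cos_\<theta>s_pos[of m] cos_\<theta>s_pos[of "Suc m"] m by auto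
    have dl: "sks y m - sks x m = (-1) ^ m * K / cos (\<theta>s m)"
      using alt_sk_diff[of m y x] m c by (cases "even m") (simp_all add: K_def field_simps)
    have "seg y m - seg x m = - (sks y m - sks x m) * sin (\<beta>s m) / cos (\<theta>s (Suc m))"
      unfolding seg_def using tlen_diff it_less by simp
    also have "sin (\<beta>s m) = sin (\<theta>s m) * cos (\<theta>s (Suc m)) + cos (\<theta>s m) * sin (\<theta>s (Suc m))"
      using sin_add[of "\<theta>s m" "\<theta>s (Suc m)"] by simp
    finally show ?thesis unfolding dl tan_def using c by (simp add: field_simps)
  qed
  have telescope:
    "(\<Sum>m<k. (-1) ^ m * (tan (\<theta>s m) + tan (\<theta>s (Suc m)))) = tan \<theta>0 - (-1) ^ k * tan (\<theta>s k)" for k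
    by (induction k) (simp_all add: algebra_simps)
  have "Lk V d it \<theta>0 y (2*n) - Lk V d it \<theta>0 x (2*n) = (\<Sum>m<2*n. seg y m - seg x m)"
    by (simp add: Lk_def seg_def sum_subtractf)
  also have "\<dots> = - K * (\<Sum>m<2*n. (-1) ^ m * (tan (\<theta>s m) + tan (\<theta>s (Suc m))))"
    by (simp add: seg_diff sum_distrib_left)
  also have "\<dots> = 0" using telescope[of "2*n"] \<theta>_period by simp
  finally show ?thesis by simp
qed

end

section \<open>Stability\<close>

text \<open>The sequences \<open>1 \<plusminus> e / (m + 2)\<close> witness both kinds of stability.\<close>

lemma lam_stable_of_eventually_porbit:
  fixes V :: "nat \<Rightarrow> complex" and Q :: "real \<Rightarrow> nat \<Rightarrow> real \<times> real"
  assumes q: "porbit V d 1 n it q"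
    and ev: "eventually (\<lambda>x. porbit V d x n it (Q x)) (at 1)"
    and lim: "\<And>k. k \<le> 2*n \<Longrightarrow> ((\<lambda>x. Q x k) \<longlongrightarrow> q k) (at 1)"
  shows "lam_plus_stable V d n it q \<and> lam_minus_stable V d n it q"
proof -
  have "eventually (\<lambda>x. 0 < x \<and> porbit V d x n it (Q x)) (at 1)"
  proof (rule eventually_conj[OF _ ev])
    show "eventually (\<lambda>x. 0 < x) (at (1::real))"
      by (rule order_tendstoD(1)[OF tendsto_ident_at]) simp
  qed
  then obtain e where e: "e > 0" "\<And>x. x \<noteq> 1 \<Longrightarrow> dist x 1 < e \<Longrightarrow> 0 < x \<and> porbit V d x n it (Q x)"
    unfolding eventually_at by blast
  define h where "h m = e * inverse (real (Suc (Suc m)))" for m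
  have h: "0 < h m" "h m < e" "h (Suc m) < h m" for m
    using e by (auto simp: h_def field_simps add_pos_nonneg)
  have "h \<longlonglongrightarrow> 0"
    unfolding h_def by (intro tendsto_mult_right_zero LIMSEQ_Suc LIMSEQ_inverse_real_of_nat)
  then have l_lim: "(\<lambda>m. 1 + \<sigma> * h m) \<longlonglongrightarrow> 1" for \<sigma>
    using tendsto_add[OF tendsto_const tendsto_mult_left] by fastforce
  have l_porbit: "0 < 1 + \<sigma> * h m \<and> porbit V d (1 + \<sigma> * h m) n it (Q (1 + \<sigma> * h m))"
    if "\<bar>\<sigma>\<bar> = 1" for \<sigma> m
    using e(2) h[of m] that by (auto simp: dist_real_def abs_mult)
  have l_conv: "(\<lambda>m. Q (1 + \<sigma> * h m) k) \<longlonglongrightarrow> q k" if "\<bar>\<sigma>\<bar> = 1" "k \<le> 2*n" for \<sigma> k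
  proof -
    have "filterlim (\<lambda>m. 1 + \<sigma> * h m) (at 1) sequentially"
      unfolding filterlim_at using l_lim that h(1)[THEN less_imp_neq] by (auto intro!: always_eventually)
    then show ?thesis using filterlim_compose[OF lim[OF that(2)]] by blast
  qed
  have "lam_plus_stable V d n it q"
    unfolding lam_plus_stable_def
    using q l_porbit[of 1] l_conv[of 1] l_lim[of 1] h(3)
    by (intro conjI exI[of _ "\<lambda>m. 1 + h m"] exI[of _ "\<lambda>m. Q (1 + h m)"]) auto
  moreover have "lam_minus_stable V d n it q"
    unfolding lam_minus_stable_def
    using q l_porbit[of "-1"] l_conv[of "-1"] l_lim[of "-1"] h(3)
    by (intro conjI exI[of _ "\<lambda>m. 1 - h m"] exI[of _ "\<lambda>m. Q (1 - h m)"]) auto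
  ultimately show ?thesis ..
qed

context cylinder
begin

lemma base_D:
  assumes "s \<in> base V d n it \<theta>0"
  shows "sks s (2*n) = s"
    and "\<And>k. k < 2*n \<Longrightarrow> bill V d (it k) (it (Suc k)) (sks s k, \<theta>s k) (sks s (Suc k), \<theta>s (Suc k))"
proof -
  obtain q where "porbit V d 1 n it q" "q 0 = (s, \<theta>0)" using assms by (auto simp: base_def)
  note orbit = porbit_1_eq[OF this] two_le_n
  show "sks s (2*n) = s" using orbit by simp
  show "bill V d (it k) (it (Suc k)) (sks s k, \<theta>s k) (sks s (Suc k), \<theta>s (Suc k))" if "k < 2*n" for k
    using orbit that by simp
qed

lemma chord_pair_step:
  assumes "a \<in> base V d n it \<theta>0" "b \<in> base V d n it \<theta>0" "k < 2*n"
  shows "chord_pair V d (it k) (it (Suc k)) (\<theta>s k) (sks a k) (sks b k) (sks a (Suc k)) (sks b (Suc k))"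
proof unfold_locales
  show "bill V d (it k) (it (Suc k)) (sks a k, \<theta>s k) (sks a (Suc k), \<beta>s k - \<theta>s k)"
    "bill V d (it k) (it (Suc k)) (sks b k, \<theta>s k) (sks b (Suc k), \<beta>s k - \<theta>s k)"
    using base_D(2)[OF assms(1,3)] base_D(2)[OF assms(2,3)] by simp_all
  show "\<bar>\<beta>s k - \<theta>s k\<bar> < pi / 2" using \<theta>_bound[of "Suc k"] assms(3) by simp
qed

end

locale cylinder_sign_change = cylinder +
  fixes a b :: real
  assumes a_less_b: "a < b"
    and a_base: "a \<in> base V d n it \<theta>0" and b_base: "b \<in> base V d n it \<theta>0"
    and deriv_a_pos: "s_lam_deriv a (2*n) > 0" and deriv_b_neg: "s_lam_deriv b (2*n) < 0"
begin

abbreviation Da :: real where "Da \<equiv> s_lam_deriv a (2*n)"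
abbreviation Db :: real where "Db \<equiv> s_lam_deriv b (2*n)"

text \<open>\<open>s \<mapsto> s_lam_deriv s (2 * n)\<close> is affine, so \<open>s_star\<close> is its zero.\<close>

definition \<rho> :: real where "\<rho> = Da / (Da - Db)"
definition s_star :: real where "s_star = a + \<rho> * (b - a)"

lemma \<rho>_bounds: "0 < \<rho>" "\<rho> < 1"
  using deriv_a_pos deriv_b_neg by (auto simp: \<rho>_def field_simps)

lemma s_star_between: "a < s_star" "s_star < b"
proof -
  have "0 < \<rho> * (b - a)" "\<rho> * (b - a) < 1 * (b - a)"
    using \<rho>_bounds a_less_b by (auto intro: mult_strict_right_mono)
  then show "a < s_star" "s_star < b" by (auto simp: s_star_def)
qed

lemma sks_s_star: "sks s_star k = sks a k + \<rho> * (sks b k - sks a k)"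
  unfolding sk_affine[of s_star k] sk_affine[of a k] sk_affine[of b k] by (simp add: s_star_def algebra_simps)

lemma sks_s_star_between:
  assumes k: "k \<le> 2*n"
  shows "min (sks a k) (sks b k) < sks s_star k \<and> sks s_star k < max (sks a k) (sks b k)"
proof -
  have "sks a k \<noteq> sks b k"
    using alt_sk_diff[OF k, of b a] cos_\<theta>s_pos[of 0] a_less_b by auto
  then show ?thesis unfolding sks_s_star using strictly_between \<rho>_bounds by blast
qed

lemma sks_s_star_period: "sks s_star (2*n) = s_star"
  unfolding sks_s_star base_D(1)[OF a_base] base_D(1)[OF b_base] by (simp add: s_star_def)

definition orbit_star :: "nat \<Rightarrow> real \<times> real" where
  "orbit_star k = (sks s_star k, \<theta>s k)"

lemma tlen_s_star_pos: "k < 2*n \<Longrightarrow> tlen V d (it k) (it (Suc k)) (sks s_star k) (\<theta>s k) > 0"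
  using chord_pair.len_pos_between[OF chord_pair_step[OF a_base b_base]] sks_s_star_between
  by (simp add: less_imp_le)

lemma porbit_orbit_star: "porbit V d 1 n it orbit_star"
  unfolding porbit_def bill_lam_def
proof (intro conjI allI impI)
  fix k assume k: "k < 2*n"
  interpret chord_pair V d "it k" "it (Suc k)" "\<theta>s k" "sks a k" "sks b k" "sks a (Suc k)" "sks b (Suc k)"
    using chord_pair_step[OF a_base b_base k] .
  have "bill V d (it k) (it (Suc k)) (sks s_star k, \<theta>s k) (sks s_star (Suc k), \<beta>s k - \<theta>s k)"
    using bill_between_chords[of "sks s_star k" "\<theta>s k"] sks_s_star_between[of k]
      sks_s_star_between[of "Suc k"] chord_a(4) cos_out_pos tlen_s_star_pos k by simp
  then show "\<exists>\<theta>'. bill V d (it k) (it (Suc k)) (orbit_star k) (fst (orbit_star (Suc k)), \<theta>') \<and>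
      snd (orbit_star (Suc k)) = 1 * \<theta>'"
    by (simp add: orbit_star_def)
next
  show "orbit_star (2*n) = orbit_star 0" using sks_s_star_period \<theta>_period by (simp add: orbit_star_def)
qed

definition diff_quot :: "real \<Rightarrow> real \<Rightarrow> real" where
  "diff_quot s x = (s_lam x s (2*n) - s) / (x - 1)"

text \<open>For \<open>\<lambda> \<noteq> 1\<close> the affine map \<open>s \<mapsto> s_lam \<lambda> s (2 * n)\<close> has the fixed point \<open>fix_lam \<lambda>\<close>;
  written through the difference quotients at \<open>a\<close> and \<open>b\<close>, it visibly tends to \<open>s_star\<close>.\<close>

definition fix_lam :: "real \<Rightarrow> real" where
  "fix_lam x = a - diff_quot a x * (b - a) / (diff_quot b x - diff_quot a x)"

definition orbit_lam :: "real \<Rightarrow> nat \<Rightarrow> real \<times> real" where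
  "orbit_lam x k = (s_lam x (fix_lam x) k, theta_lam x k)"

lemma diff_quot_tendsto:
  assumes "s \<in> base V d n it \<theta>0"
  shows "(diff_quot s \<longlongrightarrow> s_lam_deriv s (2*n)) (at 1)"
proof -
  have "((\<lambda>y. (s_lam y s (2*n) - s_lam 1 s (2*n)) / (y - 1)) \<longlongrightarrow> s_lam_deriv s (2*n)) (at 1)"
    using s_lam_has_derivative[of "2*n" s] unfolding has_field_derivative_iff by simp
  then show ?thesis using base_D(1)[OF assms] by (simp add: diff_quot_def[abs_def] s_lam_1)
qed

lemma fix_lam_tendsto: "(fix_lam \<longlongrightarrow> s_star) (at 1)"
proof -
  have "s_star = a - Da * (b - a) / (Db - Da)"
    using deriv_a_pos deriv_b_neg by (simp add: s_star_def \<rho>_def field_simps)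
  moreover have "(fix_lam \<longlongrightarrow> a - Da * (b - a) / (Db - Da)) (at 1)"
    unfolding fix_lam_def[abs_def] using deriv_a_pos deriv_b_neg
    by (intro tendsto_intros diff_quot_tendsto a_base b_base) auto
  ultimately show ?thesis by simp
qed

lemma s_lam_fix_lam_period:
  assumes x: "x \<noteq> 1" and q: "diff_quot b x \<noteq> diff_quot a x"
  shows "s_lam x (fix_lam x) (2*n) = fix_lam x"
proof -
  define A B where "A = s_lam x 0 (2*n)" and "B = s_lam x 1 (2*n) - s_lam x 0 (2*n)"
  have aff: "s_lam x z (2*n) = A + z * B" for z unfolding A_def B_def by (rule s_lam_affine)
  have x1: "x - 1 \<noteq> 0" using x by simp
  have qa: "diff_quot a x = (A + a * B - a) / (x - 1)" by (simp add: diff_quot_def aff)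
  have qb: "diff_quot b x = (A + b * B - b) / (x - 1)" by (simp add: diff_quot_def aff)
  have "diff_quot b x - diff_quot a x = (B - 1) * (b - a) / (x - 1)"
    unfolding qa qb diff_divide_distrib[symmetric] by (simp add: algebra_simps)
  moreover have "b - a \<noteq> 0" using a_less_b by simp
  ultimately have B1: "B - 1 \<noteq> 0" and "fix_lam x = a - (A + a * B - a) / (B - 1)"
    using q x1 by (auto simp: fix_lam_def qa)
  then show ?thesis unfolding aff by (simp add: field_simps)
qed

lemma s_lam_fix_lam_tendsto:
  assumes k: "k \<le> 2*n"
  shows "((\<lambda>x. s_lam x (fix_lam x) k) \<longlongrightarrow> sks s_star k) (at 1)"
proof -
  have s_lam_tendsto: "((\<lambda>x. s_lam x z k) \<longlongrightarrow> s_lam 1 z k) (at 1)" for z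
    using DERIV_isCont[OF s_lam_has_derivative[OF k]] isCont_def by blast
  have "((\<lambda>x. s_lam x 0 k + fix_lam x * (s_lam x 1 k - s_lam x 0 k))
      \<longlongrightarrow> s_lam 1 0 k + s_star * (s_lam 1 1 k - s_lam 1 0 k)) (at 1)"
    by (intro tendsto_intros s_lam_tendsto fix_lam_tendsto)
  moreover have "(\<lambda>x. s_lam x (fix_lam x) k) = (\<lambda>x. s_lam x 0 k + fix_lam x * (s_lam x 1 k - s_lam x 0 k))"
    by (rule ext) (rule s_lam_affine)
  moreover have "s_lam 1 0 k + s_star * (s_lam 1 1 k - s_lam 1 0 k) = sks s_star k"
    using s_lam_affine[of 1 s_star k] by (simp add: s_lam_1)
  ultimately show ?thesis by simp
qed

lemma theta_lam_tendsto: "((\<lambda>x. theta_lam x k) \<longlongrightarrow> \<theta>s k) (at 1)"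
  using DERIV_isCont[OF theta_lam_has_derivative] isCont_def theta_lam_1 by metis

lemma orbit_lam_tendsto: "k \<le> 2*n \<Longrightarrow> ((\<lambda>x. orbit_lam x k) \<longlongrightarrow> orbit_star k) (at 1)"
  unfolding orbit_lam_def orbit_star_def by (intro tendsto_Pair s_lam_fix_lam_tendsto theta_lam_tendsto)

lemma eventually_diff_quot_neq: "eventually (\<lambda>x. diff_quot b x \<noteq> diff_quot a x) (at 1)"
  using order_tendstoD(2)[OF tendsto_diff[OF diff_quot_tendsto[OF b_base] diff_quot_tendsto[OF a_base]], of 0]
    deriv_a_pos deriv_b_neg by (auto elim: eventually_mono)

lemma eventually_s_lam_between:
  "eventually (\<lambda>x. \<forall>k\<le>2*n. min (sks a k) (sks b k) < s_lam x (fix_lam x) k \<and>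
                             s_lam x (fix_lam x) k < max (sks a k) (sks b k)) (at 1)"
proof -
  have "eventually (\<lambda>x. min (sks a k) (sks b k) < s_lam x (fix_lam x) k \<and>
      s_lam x (fix_lam x) k < max (sks a k) (sks b k)) (at 1)" if k: "k \<le> 2*n" for k
    using order_tendstoD[OF s_lam_fix_lam_tendsto[OF k]] sks_s_star_between[OF k]
    by (auto intro: eventually_conj)
  then have "eventually (\<lambda>x. \<forall>k\<in>{..2*n}. min (sks a k) (sks b k) < s_lam x (fix_lam x) k \<and>
      s_lam x (fix_lam x) k < max (sks a k) (sks b k)) (at 1)"
    by (intro eventually_ball_finite) auto
  then show ?thesis by (rule eventually_mono) auto
qed

lemma eventually_step_conditions:
  "eventually (\<lambda>x. \<forall>k<2*n. \<bar>theta_lam x k\<bar> < pi / 2 \<and> cos (\<beta>s k - theta_lam x k) \<noteq> 0 \<and>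
      tlen V d (it k) (it (Suc k)) (s_lam x (fix_lam x) k) (theta_lam x k) > 0) (at 1)"
proof -
  have "eventually (\<lambda>x. \<bar>theta_lam x k\<bar> < pi / 2 \<and> cos (\<beta>s k - theta_lam x k) \<noteq> 0 \<and>
      tlen V d (it k) (it (Suc k)) (s_lam x (fix_lam x) k) (theta_lam x k) > 0) (at 1)"
    if k: "k < 2*n" for k
  proof -
    have c: "cos (\<beta>s k - \<theta>s k) > 0" using cos_\<theta>s_pos[of "Suc k"] k by simp
    have "((\<lambda>x. tlen V d (it k) (it (Suc k)) (s_lam x (fix_lam x) k) (theta_lam x k))
        \<longlongrightarrow> tlen V d (it k) (it (Suc k)) (sks s_star k) (\<theta>s k)) (at 1)"
      unfolding tlen_eq[OF it_less it_less] using c k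
      by (intro tendsto_intros s_lam_fix_lam_tendsto theta_lam_tendsto) auto
    then have "eventually (\<lambda>x. tlen V d (it k) (it (Suc k)) (s_lam x (fix_lam x) k) (theta_lam x k) > 0) (at 1)"
      using order_tendstoD(1) tlen_s_star_pos[OF k] by blast
    moreover have "\<bar>\<theta>s k\<bar> < pi / 2" using \<theta>_bound k by simp
    then have "eventually (\<lambda>x. \<bar>theta_lam x k\<bar> < pi / 2) (at 1)"
      by (rule order_tendstoD(2)[OF tendsto_rabs[OF theta_lam_tendsto]])
    moreover have "eventually (\<lambda>x. 0 < cos (\<beta>s k - theta_lam x k)) (at 1)"
      using order_tendstoD(1)[OF tendsto_cos[OF tendsto_diff[OF tendsto_const theta_lam_tendsto]], of 0] c
      by simp
    ultimately show ?thesis by eventually_elim auto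
  qed
  then have "eventually (\<lambda>x. \<forall>k\<in>{..<2*n}. \<bar>theta_lam x k\<bar> < pi / 2 \<and> cos (\<beta>s k - theta_lam x k) \<noteq> 0 \<and>
      tlen V d (it k) (it (Suc k)) (s_lam x (fix_lam x) k) (theta_lam x k) > 0) (at 1)"
    by (intro eventually_ball_finite) auto
  then show ?thesis by (rule eventually_mono) auto
qed

lemma porbit_orbit_lam:
  assumes x: "0 < x" "x \<noteq> 1" "diff_quot b x \<noteq> diff_quot a x"
    and steps: "\<forall>k<2*n. \<bar>theta_lam x k\<bar> < pi / 2 \<and> cos (\<beta>s k - theta_lam x k) \<noteq> 0 \<and>
      tlen V d (it k) (it (Suc k)) (s_lam x (fix_lam x) k) (theta_lam x k) > 0"
    and between: "\<forall>k\<le>2*n. min (sks a k) (sks b k) < s_lam x (fix_lam x) k \<and>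
                             s_lam x (fix_lam x) k < max (sks a k) (sks b k)"
  shows "porbit V d x n it (orbit_lam x)"
  unfolding porbit_def bill_lam_def
proof (intro conjI allI impI)
  fix k assume k: "k < 2*n"
  interpret chord_pair V d "it k" "it (Suc k)" "\<theta>s k" "sks a k" "sks b k" "sks a (Suc k)" "sks b (Suc k)"
    using chord_pair_step[OF a_base b_base k] .
  have "min (sks a (Suc k)) (sks b (Suc k)) < s_lam x (fix_lam x) (Suc k) \<and>
      s_lam x (fix_lam x) (Suc k) < max (sks a (Suc k)) (sks b (Suc k))"
    using between k by (simp del: sk.simps s_lam.simps)
  then have "bill V d (it k) (it (Suc k)) (s_lam x (fix_lam x) k, theta_lam x k)
      (s_lam x (fix_lam x) (Suc k), \<beta>s k - theta_lam x k)"
    using bill_between_chords[of "s_lam x (fix_lam x) k" "theta_lam x k"] steps between k by simp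
  then show "\<exists>\<theta>'. bill V d (it k) (it (Suc k)) (orbit_lam x k) (fst (orbit_lam x (Suc k)), \<theta>') \<and>
      snd (orbit_lam x (Suc k)) = x * \<theta>'"
    by (intro exI[of _ "\<beta>s k - theta_lam x k"]) (simp add: orbit_lam_def)
next
  show "orbit_lam x (2*n) = orbit_lam x 0"
    using s_lam_fix_lam_period theta_lam_period x by (simp add: orbit_lam_def)
qed

lemma eventually_porbit_orbit_lam: "eventually (\<lambda>x. porbit V d x n it (orbit_lam x)) (at 1)"
proof -
  have "eventually (\<lambda>x. 0 < x) (at (1::real))"
    by (rule order_tendstoD(1)[OF tendsto_ident_at]) simp
  moreover have "eventually (\<lambda>x. x \<noteq> 1) (at (1::real))"
    by (rule eventually_neq_at_within)
  ultimately show ?thesis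
    using eventually_diff_quot_neq eventually_step_conditions eventually_s_lam_between
    by eventually_elim (rule porbit_orbit_lam)
qed

lemma orbit_star_lam_stable: "lam_plus_stable V d n it orbit_star \<and> lam_minus_stable V d n it orbit_star"
  by (rule lam_stable_of_eventually_porbit[OF porbit_orbit_star eventually_porbit_orbit_lam orbit_lam_tendsto])

end

theorem theorem3p10:
  fixes V :: "nat \<Rightarrow> complex" and d n :: nat and it :: "nat \<Rightarrow> nat"
    and th0 a b :: real
  assumes polygon: "simple_ccw_polygon V d"
    and n2: "2 \<le> n"
    and it_range: "\<forall>k. it k < d"
    and it_per: "\<forall>k. it (k + 2*n) = it k"
    and th0_def: "th0 = (1 / (2 * real n)) *
          (\<Sum>k<2*n. (-1) ^ (k+1) * real k * beta V d (it k) (it (Suc k)))"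
    and a_in: "a \<in> base V d n it th0"
    and b_in: "b \<in> base V d n it th0"
    and ab: "a < b"
    and ineq_a: "(\<Sum>k=1..2*n. (-1) ^ k * thk V d it th0 (k mod (2*n)) * Lk V d it th0 a k)
                 < Omega0 V d n it * Lk V d it th0 a (2*n)"
    and ineq_b: "Omega0 V d n it * Lk V d it th0 a (2*n)
                 < (\<Sum>k=1..2*n. (-1) ^ k * thk V d it th0 (k mod (2*n)) * Lk V d it th0 b k)"
  shows "cyl_lam_stable V d n it th0 \<and>
         (\<exists>s q. a < s \<and> s < b \<and> q 0 = (s, th0) \<and>
                lam_plus_stable V d n it q \<and> lam_minus_stable V d n it q)"
proof -
  interpret ccw_polygon V d using polygon by unfold_locales
  obtain qa where qa: "porbit V d 1 n it qa" "qa 0 = (a, th0)" using a_in by (auto simp: base_def)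
  note orbit_a = porbit_1_eq[OF qa]
  interpret cylinder V d n it th0
    using n2 it_range th0_def orbit_a by unfold_locales auto
  have "s_lam_deriv a (2*n) * cos th0 > 0" "s_lam_deriv b (2*n) * cos th0 < 0"
    using s_lam_deriv_period[of a] s_lam_deriv_period[of b] Lk_period_indep[of b a] ineq_a ineq_b
    by simp_all
  then interpret cylinder_sign_change V d n it th0 a b
    using ab a_in b_in cos_\<theta>s_pos[of 0] by unfold_locales (simp_all add: zero_less_mult_iff mult_less_0_iff)
  have "s_star \<in> base V d n it th0" "orbit_star 0 = (s_star, th0)"
    using porbit_orbit_star by (auto simp: base_def orbit_star_def)
  then show ?thesis
    unfolding cyl_lam_stable_def using orbit_star_lam_stable s_star_between by blast
qed

end
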